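(* Let $b_+,b_->0$, $\delta_\pm\in\mathbb R$ with $b_\pm+\delta_\pm>0$, and $c>0$, and let $\hat H_{\mathrm{II}}(k)$ be the type-II interface Hamiltonian defined in the context. (i) If $\delta_+\delta_-<0$, then $0$ is a two-fold eigenvalue of $\hat H_{\mathrm{II}}(0)$ (its eigenspace in $\ell^2(\mathbb Z;\mathbb C^6)$ is two-dimensional). (ii) If $\delta_+\delta_->0$, then $\hat H_{\mathrm{II}}(0)$ is invertible; consequently $0$ is not an eigenvalue of $\hat H_{\mathrm{II}}(0)$.
   Context: Coefficients: for $n\in\mathbb Z$ let $b_n=b_+$ for $n\ge0$ and $b_n=b_-$ for $n\le-1$; $c_n=b_++\delta_+$ for $n\ge0$, $c_{-1}=c$, $c_n=b_-+\delta_-$ for $n\le-2$; $d_n=b_++\delta_+$ for $n\ge0$, $d_{-1}=d_{-2}=c$, $d_n=b_-+\delta_-$ for $n\le-3$. For $k\in[-\pi,\pi)$, $\hat H_{\mathrm{II}}(k)$ is the bounded self-adjoint operator on $\ell^2(\mathbb Z;\mathbb C^6)$ acting on $w=\{(w_{j,n})_{j=1}^6\}_{n\in\mathbb Z}$ by $(\hat H_{\mathrm{II}}(k)w)_{1,n}=-b_nw_{4,n}-b_nw_{5,n}-c_ne^{-ik}w_{6,n+1}$, $(\hat H_{\mathrm{II}}(k)w)_{2,n}=-b_nw_{4,n}-d_{n-2}e^{ik}w_{5,n-2}-b_nw_{6,n}$, $(\hat H_{\mathrm{II}}(k)w)_{3,n}=-c_nw_{4,n+1}-b_nw_{5,n}-b_nw_{6,n}$,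 $(\hat H_{\mathrm{II}}(k)w)_{4,n}=-b_nw_{1,n}-b_nw_{2,n}-c_{n-1}w_{3,n-1}$, $(\hat H_{\mathrm{II}}(k)w)_{5,n}=-b_nw_{1,n}-d_ne^{-ik}w_{2,n+2}-b_nw_{3,n}$, $(\hat H_{\mathrm{II}}(k)w)_{6,n}=-c_{n-1}e^{ik}w_{1,n-1}-b_nw_{2,n}-b_nw_{3,n}$. *)

theory Defs
  imports "HOL-Analysis.Analysis"
begin

text \<open>Elements of l2(Z; C^6) are represented as functions w :: int => nat => complex,
  where w n j is the component w_{j,n} for j in {1..6}; components outside {1..6} are zero.\<close>

type_synonym seq6 = "int \<Rightarrow> nat \<Rightarrow> complex"

definition l2_6 :: "seq6 set" where
  "l2_6 = {w. (\<forall>n j. j \<notin> {1..6} \<longrightarrow> w n j = 0) \<and>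
              (\<lambda>n. \<Sum>j\<in>{1..6}. (cmod (w n j))\<^sup>2) summable_on (UNIV :: int set)}"

definition l2_norm6 :: "seq6 \<Rightarrow> real" where
  "l2_norm6 w = sqrt (\<Sum>\<^sub>\<infinity>n\<in>(UNIV :: int set). \<Sum>j\<in>{1..6}. (cmod (w n j))\<^sup>2)"

definition bcoef :: "real \<Rightarrow> real \<Rightarrow> int \<Rightarrow> real" where
  "bcoef bp bm n = (if n \<ge> 0 then bp else bm)"

definition ccoef :: "real \<Rightarrow> real \<Rightarrow> real \<Rightarrow> real \<Rightarrow> real \<Rightarrow> int \<Rightarrow> real" where
  "ccoef bp bm dp dm c n = (if n \<ge> 0 then bp + dp else if n = -1 then c else bm + dm)"

definition dcoef :: "real \<Rightarrow> real \<Rightarrow> real \<Rightarrow> real \<Rightarrow> real \<Rightarrow> int \<Rightarrow> real" where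
  "dcoef bp bm dp dm c n = (if n \<ge> 0 then bp + dp else if n = -1 \<or> n = -2 then c else bm + dm)"

definition H_II :: "real \<Rightarrow> real \<Rightarrow> real \<Rightarrow> real \<Rightarrow> real \<Rightarrow> real \<Rightarrow> seq6 \<Rightarrow> seq6" where
  "H_II bp bm dp dm c k w n j =
    (let b = (\<lambda>m. complex_of_real (bcoef bp bm m));
         cc = (\<lambda>m. complex_of_real (ccoef bp bm dp dm c m));
         d = (\<lambda>m. complex_of_real (dcoef bp bm dp dm c m));
         ep = exp (\<i> * complex_of_real k);
         em = exp (- \<i> * complex_of_real k)
     in if j = 1 then - b n * w n 4 - b n * w n 5 - cc n * em * w (n+1) 6
        else if j = 2 then - b n * w n 4 - d (n-2) * ep * w (n-2) 5 - b n * w n 6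
        else if j = 3 then - cc n * w (n+1) 4 - b n * w n 5 - b n * w n 6
        else if j = 4 then - b n * w n 1 - b n * w n 2 - cc (n-1) * w (n-1) 3
        else if j = 5 then - b n * w n 1 - d n * em * w (n+2) 2 - b n * w n 3
        else if j = 6 then - cc (n-1) * ep * w (n-1) 1 - b n * w n 2 - b n * w n 3
        else 0)"

definition ker_H_II :: "real \<Rightarrow> real \<Rightarrow> real \<Rightarrow> real \<Rightarrow> real \<Rightarrow> real \<Rightarrow> seq6 set" where
  "ker_H_II bp bm dp dm c k = {w \<in> l2_6. H_II bp bm dp dm c k w = (\<lambda>n j. 0)}"

definition two_dim :: "seq6 set \<Rightarrow> bool" where
  "two_dim S \<longleftrightarrow> (\<exists>u\<in>S. \<exists>v\<in>S.
      (\<forall>a b :: complex. (\<lambda>n j. a * u n j + b * v n j) = (\<lambda>n j. 0) \<longrightarrow> a = 0 \<and> b = 0) \<and>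
      (\<forall>w\<in>S. \<exists>a b :: complex. w = (\<lambda>n j. a * u n j + b * v n j)))"

definition invertible_l2 :: "(seq6 \<Rightarrow> seq6) \<Rightarrow> bool" where
  "invertible_l2 A \<longleftrightarrow> (\<exists>G. (\<forall>v\<in>l2_6. G v \<in> l2_6 \<and> A (G v) = v) \<and>
                            (\<forall>w\<in>l2_6. G (A w) = w) \<and>
                            (\<exists>C. \<forall>v\<in>l2_6. l2_norm6 (G v) \<le> C * l2_norm6 v))"

end

(*
  H_II(0) is bipartite: rows 1-3 involve only the components w4, w5, w6 and rows 4-6 only
  w1, w2, w3.  Read in the reflected index k = -n, rows 4-6 have the shape of rows 1-3 with the
  two bulks exchanged, so both blocks are instances of one operator T whose coefficients are
  constant far to the left and far to the right.

  For T (X4, X5, X6) = F the difference X4 - X6 satisfies a first-order recurrence with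
  coefficient b/c, and the sum X4 + X6 a second-order one, which a positive solution of the
  associated Riccati equation factors into two first-order recurrences.  A first-order recurrence
  whose coefficient has modulus eventually below 1 at both ends, or eventually above 1 at both
  ends, is boundedly solvable on l2 and has no nonzero homogeneous l2 solution; if the two ends
  behave differently, the homogeneous l2 solutions form a line.  In a bulk with parameter delta
  the first modulus is b/(b + delta) and the second is the positive fixed point of the Riccati
  map; the former is below 1 and the latter above 1 exactly when delta > 0.  Hence for
  delta+ delta- > 0 both blocks are boundedly invertible, while for delta+ delta- < 0 each has a
  one-dimensional kernel.
*)

theory Submission
  imports Defs
begin

section \<open>Square-summable sequences on \<open>\<int>\<close>\<close>

definition l2 :: "(int \<Rightarrow> complex) \<Rightarrow> bool" where
  "l2 f \<longleftrightarrow> (\<lambda>n. (cmod (f n))\<^sup>2) summable_on (UNIV :: int set)"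

definition sqnorm :: "(int \<Rightarrow> complex) \<Rightarrow> real" where
  "sqnorm f = (\<Sum>\<^sub>\<infinity>n\<in>(UNIV :: int set). (cmod (f n))\<^sup>2)"

lemma sqnorm_nonneg: "sqnorm f \<ge> 0"
  unfolding sqnorm_def by (rule infsum_nonneg) auto

lemma sum_sq_le_sqnorm: "l2 f \<Longrightarrow> finite F \<Longrightarrow> (\<Sum>n\<in>F. (cmod (f n))\<^sup>2) \<le> sqnorm f"
  unfolding l2_def sqnorm_def by (rule finite_sum_le_infsum) auto

lemma l2_sqnorm_leI:
  assumes "\<And>F. finite F \<Longrightarrow> (\<Sum>n\<in>F. (cmod (f n))\<^sup>2) \<le> C"
  shows "l2 f" and "sqnorm f \<le> C"
proof -
  show s: "l2 f"
    unfolding l2_def by (rule nonneg_bdd_above_summable_on) (auto intro!: bdd_aboveI2 assms)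
  show "sqnorm f \<le> C"
    unfolding sqnorm_def by (rule infsum_le_finite_sums[OF s[unfolded l2_def]]) (use assms in auto)
qed

lemma norm_le_sqrt_sqnorm: "l2 f \<Longrightarrow> cmod (f n) \<le> sqrt (sqnorm f)"
  using sum_sq_le_sqnorm[of f "{n}"] real_le_rsqrt by simp

lemma l2_zero: "l2 (\<lambda>n. 0)"
  using l2_sqnorm_leI(1)[of "\<lambda>n. 0" 0] by simp

lemma l2_add:
  assumes "l2 f" "l2 g"
  shows "l2 (\<lambda>n. f n + g n)" and "sqnorm (\<lambda>n. f n + g n) \<le> 2 * sqnorm f + 2 * sqnorm g"
proof -
  have "(\<Sum>n\<in>F. (cmod (f n + g n))\<^sup>2) \<le> 2 * sqnorm f + 2 * sqnorm g" if F: "finite F" for F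
  proof -
    have "(cmod (f n + g n))\<^sup>2 \<le> 2 * (cmod (f n))\<^sup>2 + 2 * (cmod (g n))\<^sup>2" for n
    proof -
      have "(cmod (f n + g n))\<^sup>2 \<le> (cmod (f n) + cmod (g n))\<^sup>2"
        by (simp add: power_mono norm_triangle_ineq)
      also have "\<dots> \<le> 2 * (cmod (f n))\<^sup>2 + 2 * (cmod (g n))\<^sup>2"
        using zero_le_power2[of "cmod (f n) - cmod (g n)"] by (simp add: power2_eq_square algebra_simps)
      finally show ?thesis .
    qed
    then have "(\<Sum>n\<in>F. (cmod (f n + g n))\<^sup>2)
        \<le> 2 * (\<Sum>n\<in>F. (cmod (f n))\<^sup>2) + 2 * (\<Sum>n\<in>F. (cmod (g n))\<^sup>2)"
      by (simp add: sum_mono sum.distrib[symmetric] sum_distrib_left)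
    also have "\<dots> \<le> 2 * sqnorm f + 2 * sqnorm g"
      using sum_sq_le_sqnorm[OF assms(1) F] sum_sq_le_sqnorm[OF assms(2) F] by linarith
    finally show ?thesis .
  qed
  then show "l2 (\<lambda>n. f n + g n)" and "sqnorm (\<lambda>n. f n + g n) \<le> 2 * sqnorm f + 2 * sqnorm g"
    by (blast intro: l2_sqnorm_leI)+
qed

lemma l2_mult:
  assumes "\<And>n. cmod (m n) \<le> B" "l2 f"
  shows "l2 (\<lambda>n. m n * f n)" and "sqnorm (\<lambda>n. m n * f n) \<le> B\<^sup>2 * sqnorm f"
proof -
  have "(\<Sum>n\<in>F. (cmod (m n * f n))\<^sup>2) \<le> B\<^sup>2 * sqnorm f" if F: "finite F" for F
  proof -
    have "(cmod (m n * f n))\<^sup>2 \<le> B\<^sup>2 * (cmod (f n))\<^sup>2" for n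
    proof -
      have "cmod (m n * f n) \<le> B * cmod (f n)"
        by (simp add: norm_mult assms(1) mult_right_mono)
      then show ?thesis by (metis norm_ge_zero power_mono power_mult_distrib)
    qed
    then have "(\<Sum>n\<in>F. (cmod (m n * f n))\<^sup>2) \<le> B\<^sup>2 * (\<Sum>n\<in>F. (cmod (f n))\<^sup>2)"
      by (simp add: sum_mono sum_distrib_left)
    also have "\<dots> \<le> B\<^sup>2 * sqnorm f"
      using sum_sq_le_sqnorm[OF assms(2) F] by (simp add: mult_left_mono)
    finally show ?thesis .
  qed
  then show "l2 (\<lambda>n. m n * f n)" and "sqnorm (\<lambda>n. m n * f n) \<le> B\<^sup>2 * sqnorm f"
    by (blast intro: l2_sqnorm_leI)+
qed

lemma l2_cmult: "l2 f \<Longrightarrow> l2 (\<lambda>n. a * f n)"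
  using l2_mult(1)[of "\<lambda>n. a" "cmod a" f] by simp

lemma l2_diff: "l2 f \<Longrightarrow> l2 g \<Longrightarrow> l2 (\<lambda>n. f n - g n)"
  using l2_add(1)[of f "\<lambda>n. - 1 * g n"] l2_cmult[of g "- 1"] by simp

lemma l2_reindex:
  assumes "inj h" "l2 f"
  shows "l2 (\<lambda>n. f (h n))" and "sqnorm (\<lambda>n. f (h n)) \<le> sqnorm f"
proof -
  have "(\<Sum>n\<in>F. (cmod (f (h n)))\<^sup>2) \<le> sqnorm f" if F: "finite F" for F
  proof -
    have "(\<Sum>n\<in>F. (cmod (f (h n)))\<^sup>2) = (\<Sum>n\<in>h ` F. (cmod (f n))\<^sup>2)"
      using assms(1) by (simp add: sum.reindex inj_on_subset[of h UNIV])
    also have "\<dots> \<le> sqnorm f" using sum_sq_le_sqnorm[OF assms(2)] F by simp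
    finally show ?thesis .
  qed
  then show "l2 (\<lambda>n. f (h n))" and "sqnorm (\<lambda>n. f (h n)) \<le> sqnorm f"
    by (blast intro: l2_sqnorm_leI)+
qed

lemma l2_shift: "l2 f \<Longrightarrow> l2 (\<lambda>n. f (n + k))"
  and sqnorm_shift_le: "l2 f \<Longrightarrow> sqnorm (\<lambda>n. f (n + k)) \<le> sqnorm f"
  using l2_reindex[of "\<lambda>n. n + k" f] by (simp_all add: inj_on_def)

lemma l2_reflect: "l2 f \<Longrightarrow> l2 (\<lambda>n. f (- n))"
  and sqnorm_reflect_le: "l2 f \<Longrightarrow> sqnorm (\<lambda>n. f (- n)) \<le> sqnorm f"
  using l2_reindex[of "\<lambda>n. - n" f] by (simp_all add: inj_on_def)

lemma sqnorm_reflect: "l2 f \<Longrightarrow> sqnorm (\<lambda>n. f (- n)) = sqnorm f"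
  using sqnorm_reflect_le[of f] sqnorm_reflect_le[of "\<lambda>n. f (- n)"] l2_reflect[of f] by simp

lemma l2_tendsto_zero_up:
  assumes "l2 f"
  shows "(\<lambda>k. (cmod (f (n + int k)))\<^sup>2) \<longlonglongrightarrow> 0"
proof (rule summable_LIMSEQ_zero, rule summableI_nonneg_bounded)
  fix L
  have "(\<Sum>k<L. (cmod (f (n + int k)))\<^sup>2) = (\<Sum>m\<in>(\<lambda>k. n + int k) ` {..<L}. (cmod (f m))\<^sup>2)"
    by (simp add: sum.reindex inj_on_def)
  also have "\<dots> \<le> sqnorm f" using sum_sq_le_sqnorm[OF assms] by simp
  finally show "(\<Sum>k<L. (cmod (f (n + int k)))\<^sup>2) \<le> sqnorm f" .
qed auto

lemma l2_tendsto_zero_down: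
  assumes "l2 f"
  shows "(\<lambda>k. (cmod (f (n - int k)))\<^sup>2) \<longlonglongrightarrow> 0"
  using l2_tendsto_zero_up[OF l2_reflect[OF assms], of "- n"] by simp

section \<open>First-order recurrences on \<open>\<ell>\<^sup>2(\<int>)\<close>\<close>

text \<open>\<open>R u x\<close> reads: \<open>x\<close> solves the problem with data \<open>u\<close>.\<close>

definition bounded_solvable :: "((int \<Rightarrow> complex) \<Rightarrow> (int \<Rightarrow> complex) \<Rightarrow> bool) \<Rightarrow> bool" where
  "bounded_solvable R \<longleftrightarrow> (\<exists>K. \<forall>u. l2 u \<longrightarrow> (\<exists>x. l2 x \<and> sqnorm x \<le> K * sqnorm u \<and> R u x))"

lemma bounded_solvableI:
  assumes "\<And>u. l2 u \<Longrightarrow> \<exists>x. l2 x \<and> sqnorm x \<le> K * sqnorm u \<and> R u x"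
  shows "bounded_solvable R"
  using assms unfolding bounded_solvable_def by blast

lemma bounded_solvableE:
  assumes "bounded_solvable R"
  obtains K where "K \<ge> 0" "\<And>u. l2 u \<Longrightarrow> \<exists>x. l2 x \<and> sqnorm x \<le> K * sqnorm u \<and> R u x"
proof -
  obtain K where K: "\<And>u. l2 u \<Longrightarrow> \<exists>x. l2 x \<and> sqnorm x \<le> K * sqnorm u \<and> R u x"
    using assms unfolding bounded_solvable_def by blast
  have "K * sqnorm u \<le> max K 0 * sqnorm u" for u
    by (rule mult_right_mono) (auto simp: sqnorm_nonneg)
  then show thesis
    using that[of "max K 0"] K by (meson max.cobounded2 order_trans)
qed

lemma bounded_solvable_transform:
  assumes "bounded_solvable R'"
    and f: "\<And>u. l2 u \<Longrightarrow> l2 (f u) \<and> sqnorm (f u) \<le> A * sqnorm u"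
    and g: "\<And>x. l2 x \<Longrightarrow> l2 (g x) \<and> sqnorm (g x) \<le> B * sqnorm x"
    and R: "\<And>u x. l2 u \<Longrightarrow> R' (f u) x \<Longrightarrow> R u (g x)"
  shows "bounded_solvable R"
proof -
  obtain K where K: "K \<ge> 0" "\<And>u. l2 u \<Longrightarrow> \<exists>x. l2 x \<and> sqnorm x \<le> K * sqnorm u \<and> R' u x"
    using assms(1) by (elim bounded_solvableE) blast
  show ?thesis
  proof (rule bounded_solvableI[where K = "max B 0 * (K * max A 0)"])
    fix u assume u: "l2 u"
    obtain x where x: "l2 x" "sqnorm x \<le> K * sqnorm (f u)" "R' (f u) x"
      using K(2) f[OF u] by blast
    have "sqnorm (g x) \<le> max B 0 * sqnorm x"
      using g[OF x(1)] mult_right_mono[of B "max B 0" "sqnorm x"] sqnorm_nonneg[of x] by linarith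
    also have "\<dots> \<le> max B 0 * (K * sqnorm (f u))"
      by (rule mult_left_mono[OF x(2)]) simp
    also have "\<dots> \<le> max B 0 * (K * (max A 0 * sqnorm u))"
      using f[OF u] mult_right_mono[of A "max A 0" "sqnorm u"] sqnorm_nonneg[of u] K(1)
      by (intro mult_left_mono) auto
    finally show "\<exists>y. l2 y \<and> sqnorm y \<le> max B 0 * (K * max A 0) * sqnorm u \<and> R u y"
      using g[OF x(1)] R[OF u x(3)] by (intro exI[of _ "g x"]) (simp add: mult.assoc)
  qed
qed

lemma bounded_solvable_compose:
  assumes "bounded_solvable R1" "bounded_solvable R2"
    and "\<And>u y x. R1 u y \<Longrightarrow> R2 y x \<Longrightarrow> R u x"
  shows "bounded_solvable R"
proof -
  obtain K1 where K1: "K1 \<ge> 0" "\<And>u. l2 u \<Longrightarrow> \<exists>x. l2 x \<and> sqnorm x \<le> K1 * sqnorm u \<and> R1 u x"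
    using assms(1) by (elim bounded_solvableE) blast
  obtain K2 where K2: "K2 \<ge> 0" "\<And>u. l2 u \<Longrightarrow> \<exists>x. l2 x \<and> sqnorm x \<le> K2 * sqnorm u \<and> R2 u x"
    using assms(2) by (elim bounded_solvableE) blast
  show ?thesis
  proof (rule bounded_solvableI[where K = "K2 * K1"])
    fix u assume "l2 u"
    then obtain y where y: "l2 y" "sqnorm y \<le> K1 * sqnorm u" "R1 u y" using K1 by blast
    then obtain x where x: "l2 x" "sqnorm x \<le> K2 * sqnorm y" "R2 y x" using K2 by blast
    have "sqnorm x \<le> K2 * (K1 * sqnorm u)"
      using x(2) mult_left_mono[OF y(2) K2(1)] by linarith
    then show "\<exists>x. l2 x \<and> sqnorm x \<le> K2 * K1 * sqnorm u \<and> R u x"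
      using x y assms(3) by (auto simp: mult.assoc)
  qed
qed

fun back_prod :: "(int \<Rightarrow> complex) \<Rightarrow> int \<Rightarrow> nat \<Rightarrow> complex" where
  "back_prod \<rho> n 0 = 1"
| "back_prod \<rho> n (Suc k) = \<rho> (n - 1) * back_prod \<rho> (n - 1) k"

lemma norm_back_prod_le:
  assumes "\<And>n. cmod (\<rho> n) \<le> r"
  shows "cmod (back_prod \<rho> n k) \<le> r ^ k"
proof (induction k arbitrary: n)
  case (Suc k)
  have "cmod (back_prod \<rho> n (Suc k)) = cmod (\<rho> (n - 1)) * cmod (back_prod \<rho> (n - 1) k)"
    by (simp add: norm_mult)
  also have "\<dots> \<le> r * r ^ k"
    by (rule mult_mono) (use assms Suc order_trans[OF norm_ge_zero assms] in auto)
  finally show ?case by simp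
qed simp

text \<open>For a contraction the solution is the convergent series
  \<open>D n = \<Sum>k. \<rho>(n-1)\<cdots>\<rho>(n-k) u(n-1-k)\<close>.\<close>

lemma bounded_recurrence_solution:
  fixes \<rho> u :: "int \<Rightarrow> complex"
  assumes r: "0 \<le> r" "r < 1" and \<rho>: "\<And>n. cmod (\<rho> n) \<le> r" and u: "\<And>n. cmod (u n) \<le> B"
  obtains D where "\<And>n. D (n + 1) = \<rho> n * D n + u n" and "\<And>n. cmod (D n) \<le> B / (1 - r)"
proof -
  define D where "D n = (\<Sum>k. back_prod \<rho> n k * u (n - 1 - int k))" for n
  have term_le: "cmod (back_prod \<rho> n k * u (n - 1 - int k)) \<le> B * r ^ k" for n k
  proof -
    have "cmod (back_prod \<rho> n k) * cmod (u (n - 1 - int k)) \<le> r ^ k * B"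
      by (rule mult_mono[OF norm_back_prod_le[OF \<rho>] u]) (use r in auto)
    then show ?thesis by (simp add: norm_mult mult.commute)
  qed
  have geom: "summable (\<lambda>k. B * r ^ k)" using r by (simp add: summable_mult)
  have summ: "summable (\<lambda>k. back_prod \<rho> n k * u (n - 1 - int k))" for n
    by (rule summable_comparison_test'[OF geom]) (use term_le in auto)
  have summ_norm: "summable (\<lambda>k. cmod (back_prod \<rho> n k * u (n - 1 - int k)))" for n
    by (rule summable_comparison_test'[OF geom]) (use term_le in auto)
  show thesis
  proof (rule that)
    fix n
    have "D (n + 1) = u n + (\<Sum>k. back_prod \<rho> (n + 1) (Suc k) * u (n + 1 - 1 - int (Suc k)))"
      unfolding D_def using suminf_split_head[OF summ[of "n + 1"]] by simp
    also have "(\<Sum>k. back_prod \<rho> (n + 1) (Suc k) * u (n + 1 - 1 - int (Suc k)))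
        = (\<Sum>k. \<rho> n * (back_prod \<rho> n k * u (n - 1 - int k)))"
      by (simp add: algebra_simps)
    also have "\<dots> = \<rho> n * D n" unfolding D_def by (rule suminf_mult[OF summ])
    finally show "D (n + 1) = \<rho> n * D n + u n" by simp
    have "cmod (D n) \<le> (\<Sum>k. cmod (back_prod \<rho> n k * u (n - 1 - int k)))"
      unfolding D_def by (rule summable_norm[OF summ_norm])
    also have "\<dots> \<le> (\<Sum>k. B * r ^ k)" by (rule suminf_le[OF term_le summ_norm geom])
    also have "\<dots> = B / (1 - r)"
      using r by (simp add: suminf_mult suminf_geometric divide_inverse)
    finally show "cmod (D n) \<le> B / (1 - r)" .
  qed
qed

lemma sq_affine_le:
  fixes r x y :: real
  assumes "0 \<le> r" "r < 1"
  shows "(r * x + y)\<^sup>2 \<le> r * x\<^sup>2 + y\<^sup>2 / (1 - r)"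
proof -
  have "r * x\<^sup>2 + y\<^sup>2 / (1 - r) - (r * x + y)\<^sup>2 = r / (1 - r) * ((1 - r) * x - y)\<^sup>2"
    using assms by (simp add: field_simps power2_eq_square)
  moreover have "r / (1 - r) * ((1 - r) * x - y)\<^sup>2 \<ge> 0" using assms by simp
  ultimately show ?thesis by linarith
qed

lemma l2_sqnorm_le_windowsI:
  assumes C: "0 \<le> C" and windows: "\<And>a b. a \<le> b \<Longrightarrow> (\<Sum>n\<in>{a+1..b}. (cmod (f n))\<^sup>2) \<le> C"
  shows "l2 f" and "sqnorm f \<le> C"
proof -
  have "(\<Sum>n\<in>F. (cmod (f n))\<^sup>2) \<le> C" if F: "finite F" for F
  proof (cases "F = {}")
    case False
    then obtain x where "x \<in> F" by blast
    then have "Min F - 1 \<le> Max F" using Min_le[OF F] Max_ge[OF F] by fastforce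
    have "(\<Sum>n\<in>F. (cmod (f n))\<^sup>2) \<le> (\<Sum>n\<in>{Min F - 1 + 1..Max F}. (cmod (f n))\<^sup>2)"
      by (rule sum_mono2) (use F False in auto)
    also have "\<dots> \<le> C" by (rule windows) fact
    finally show ?thesis .
  qed (simp add: C)
  then show "l2 f" and "sqnorm f \<le> C" by (blast intro: l2_sqnorm_leI)+
qed

lemma sum_window_le_if_contracting:
  fixes x y :: "int \<Rightarrow> real"
  assumes r: "0 \<le> r" "r < 1" and step: "\<And>n. x (n + 1) \<le> r * x n + y n"
    and x: "\<And>n. 0 \<le> x n" "\<And>n. x n \<le> M" and Y: "\<And>F. finite F \<Longrightarrow> (\<Sum>n\<in>F. y n) \<le> Y" and "a \<le> b"
  shows "(\<Sum>n\<in>{a+1..b}. x n) \<le> (r * M + Y) / (1 - r)"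
proof -
  define S where "S = (\<Sum>n\<in>{a+1..b}. x n)"
  have head: "{a..b} = insert a {a+1..b}" and tail: "{a+1..b+1} = insert (b+1) {a+1..b}"
    using \<open>a \<le> b\<close> by auto
  have "S \<le> (\<Sum>n\<in>{a+1..b+1}. x n)" unfolding tail S_def using x(1) by simp
  also have "\<dots> = (\<Sum>n\<in>{a..b}. x (n + 1))"
    by (rule sum.reindex_bij_witness[of _ "\<lambda>n. n + 1" "\<lambda>n. n - 1"]) auto
  also have "\<dots> \<le> (\<Sum>n\<in>{a..b}. r * x n + y n)" by (rule sum_mono[OF step])
  also have "\<dots> = r * (x a + S) + (\<Sum>n\<in>{a..b}. y n)"
    unfolding S_def head by (simp add: sum.distrib sum_distrib_left distrib_left)
  also have "\<dots> \<le> r * (M + S) + Y"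
    using x(2)[of a] Y[of "{a..b}"] r by (intro add_mono mult_left_mono) auto
  finally have "(1 - r) * S \<le> r * M + Y" by (simp add: algebra_simps)
  then show ?thesis unfolding S_def using r by (simp add: pos_le_divide_eq mult.commute)
qed

lemma recurrence_sqnorm_bound:
  assumes r: "0 \<le> r" "r < 1" and \<rho>: "\<And>n. cmod (\<rho> n) \<le> r" and u: "l2 u"
    and D: "\<And>n. D (n + 1) = \<rho> n * D n + u n" and M: "\<And>n. (cmod (D n))\<^sup>2 \<le> M"
  shows "l2 D" and "sqnorm D \<le> (r * M + sqnorm u / (1 - r)) / (1 - r)"
proof -
  have step: "(cmod (D (n + 1)))\<^sup>2 \<le> r * (cmod (D n))\<^sup>2 + (cmod (u n))\<^sup>2 / (1 - r)" for n
  proof -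
    have "cmod (D (n + 1)) \<le> r * cmod (D n) + cmod (u n)"
      unfolding D by (rule order_trans[OF norm_triangle_ineq]) (simp add: norm_mult mult_right_mono \<rho>)
    then have "(cmod (D (n + 1)))\<^sup>2 \<le> (r * cmod (D n) + cmod (u n))\<^sup>2"
      by (simp add: power_mono)
    also have "\<dots> \<le> r * (cmod (D n))\<^sup>2 + (cmod (u n))\<^sup>2 / (1 - r)"
      by (rule sq_affine_le[OF r])
    finally show ?thesis .
  qed
  have u_sums: "(\<Sum>n\<in>F. (cmod (u n))\<^sup>2 / (1 - r)) \<le> sqnorm u / (1 - r)" if "finite F" for F
    using sum_sq_le_sqnorm[OF u that] r by (simp add: sum_divide_distrib[symmetric] divide_right_mono)
  have "0 \<le> M" by (rule order_trans[OF zero_le_power2 M])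
  then have "0 \<le> (r * M + sqnorm u / (1 - r)) / (1 - r)" using r sqnorm_nonneg[of u] by simp
  then show "l2 D" and "sqnorm D \<le> (r * M + sqnorm u / (1 - r)) / (1 - r)"
    using sum_window_le_if_contracting[OF r step zero_le_power2 M u_sums]
    by (blast intro: l2_sqnorm_le_windowsI)+
qed

lemma contracting_recurrence_solvable:
  assumes r: "0 \<le> r" "r < 1" and \<rho>: "\<And>n. cmod (\<rho> n) \<le> r"
  shows "bounded_solvable (\<lambda>u D. \<forall>n. D (n + 1) = \<rho> n * D n + u n)"
proof (rule bounded_solvableI[where K = "1 / (1 - r) ^ 3"])
  fix u assume u: "l2 u"
  obtain D where D: "\<And>n. D (n + 1) = \<rho> n * D n + u n"
    and D_le: "\<And>n. cmod (D n) \<le> sqrt (sqnorm u) / (1 - r)"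
    using bounded_recurrence_solution[where \<rho>=\<rho> and u=u, OF r \<rho> norm_le_sqrt_sqnorm[OF u]] by blast
  have M: "(cmod (D n))\<^sup>2 \<le> sqnorm u / (1 - r)\<^sup>2" for n
    using power_mono[OF D_le[of n] norm_ge_zero, of 2] sqnorm_nonneg[of u] by (simp add: power_divide)
  have "(r * (sqnorm u / (1 - r)\<^sup>2) + sqnorm u / (1 - r)) / (1 - r) = 1 / (1 - r) ^ 3 * sqnorm u"
  proof -
    define q where "q = 1 - r"
    have q: "q \<noteq> 0" "r = 1 - q" using r unfolding q_def by auto
    show ?thesis unfolding q(2) using q(1) by (simp add: field_simps power2_eq_square power3_eq_cube)
  qed
  then show "\<exists>D. l2 D \<and> sqnorm D \<le> 1 / (1 - r) ^ 3 * sqnorm u \<and> (\<forall>n. D (n + 1) = \<rho> n * D n + u n)"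
    using recurrence_sqnorm_bound[OF r \<rho> u D M] D by auto
qed

lemma eventually_both_ends:
  fixes P :: "int \<Rightarrow> bool"
  assumes "\<And>n. n \<ge> M1 \<Longrightarrow> P n" "\<And>n. n \<le> - M2 \<Longrightarrow> P n"
  obtains M where "\<And>n. \<bar>n\<bar> \<ge> M \<Longrightarrow> P n"
proof
  fix n :: int assume "\<bar>n\<bar> \<ge> max (max M1 M2) 0"
  then show "P n" using assms by (cases "n \<ge> 0") auto
qed

text \<open>A bounded coefficient that contracts outside \<open>[-M, M]\<close> is turned into a uniform
  contraction by the diagonal change of variables \<open>D n = w n * E n\<close>, where \<open>w\<close> grows
  geometrically inside the window and is constant outside it.\<close>

lemma contracting_weight:
  fixes \<rho> :: "int \<Rightarrow> complex"
  assumes B: "\<And>n. cmod (\<rho> n) \<le> B" and r: "r < 1" and M: "\<And>n. \<bar>n\<bar> \<ge> M \<Longrightarrow> cmod (\<rho> n) \<le> r"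
  obtains w :: "int \<Rightarrow> real" and W r' where "\<And>n. 1 \<le> w n" "\<And>n. w n \<le> W" "0 \<le> r'" "r' < 1"
    "\<And>n. cmod (\<rho> n) * w n / w (n + 1) \<le> r'"
proof -
  define r' where "r' = max r (1/2)"
  have r': "0 < r'" "r' < 1" "r \<le> r'" using r unfolding r'_def by auto
  define M' where "M' = max M 0"
  have M': "M' \<ge> 0" "\<And>n. \<bar>n\<bar> \<ge> M' \<Longrightarrow> cmod (\<rho> n) \<le> r'"
    using M r' unfolding M'_def by force+
  define \<gamma> where "\<gamma> = max 1 (B / r')"
  have \<gamma>: "1 \<le> \<gamma>" "B \<le> \<gamma> * r'" using r' unfolding \<gamma>_def by (auto simp: field_simps max_def)
  define w :: "int \<Rightarrow> real" where "w n = \<gamma> ^ nat (min (max n (- M')) M' + M')" for n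
  have w1: "1 \<le> w n" for n unfolding w_def using \<gamma> by simp
  have wW: "w n \<le> \<gamma> ^ nat (2 * M')" for n
    unfolding w_def by (rule power_increasing) (use \<gamma> M' in auto)
  have contr: "cmod (\<rho> n) * w n / w (n + 1) \<le> r'" for n
  proof (cases "n \<ge> M' \<or> n < - M'")
    case True
    then have "w n = w (n + 1)" unfolding w_def by auto
    moreover have "cmod (\<rho> n) \<le> r'" using True M' by auto
    ultimately show ?thesis using w1[of n] by simp
  next
    case False
    then have "nat (n + 1 + M') = Suc (nat (n + M'))"
      and "min (max (n + 1) (- M')) M' = n + 1" "min (max n (- M')) M' = n" by auto
    then have "w (n + 1) = \<gamma> * w n" unfolding w_def by simp
    then have "cmod (\<rho> n) * w n / w (n + 1) = cmod (\<rho> n) / \<gamma>" using w1[of n] by simp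
    also have "\<dots> \<le> B / \<gamma>" by (rule divide_right_mono[OF B]) (use \<gamma> in simp)
    also have "\<dots> \<le> r'" using \<gamma> by (simp add: divide_simps mult.commute)
    finally show ?thesis .
  qed
  show thesis by (rule that[OF w1 wW, of r']) (use r' contr in auto)
qed

lemma eventually_contracting_recurrence_solvable:
  fixes \<rho> :: "int \<Rightarrow> complex"
  assumes B: "\<And>n. cmod (\<rho> n) \<le> B" and r: "r < 1" and M: "\<And>n. \<bar>n\<bar> \<ge> M \<Longrightarrow> cmod (\<rho> n) \<le> r"
  shows "bounded_solvable (\<lambda>u D. \<forall>n. D (n + 1) = \<rho> n * D n + u n)"
proof -
  obtain w :: "int \<Rightarrow> real" and W r' where w: "\<And>n. 1 \<le> w n" "\<And>n. w n \<le> W"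
    and r': "0 \<le> r'" "r' < 1" and contr: "\<And>n. cmod (\<rho> n) * w n / w (n + 1) \<le> r'"
    using contracting_weight[where \<rho> = \<rho>, OF B r M] by blast
  define \<rho>' where "\<rho>' n = \<rho> n * complex_of_real (w n / w (n + 1))" for n
  have "cmod (\<rho>' n) \<le> r'" for n
    using contr[of n] w(1)[of n] w(1)[of "n + 1"] by (simp add: \<rho>'_def norm_mult norm_divide)
  then have "bounded_solvable (\<lambda>u E. \<forall>n. E (n + 1) = \<rho>' n * E n + u n)"
    by (rule contracting_recurrence_solvable[OF r'])
  then show ?thesis
  proof (rule bounded_solvable_transform[where f = "\<lambda>u n. complex_of_real (1 / w (n + 1)) * u n"
        and g = "\<lambda>E n. complex_of_real (w n) * E n" and A = "1\<^sup>2" and B = "W\<^sup>2"])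
    have le1: "cmod (complex_of_real (1 / w (n + 1))) \<le> 1" for n
      using w(1)[of "n + 1"] by (simp add: norm_divide)
    show "l2 (\<lambda>n. complex_of_real (1 / w (n + 1)) * u n)
        \<and> sqnorm (\<lambda>n. complex_of_real (1 / w (n + 1)) * u n) \<le> 1\<^sup>2 * sqnorm u" if "l2 u" for u
      using l2_mult[where m = "\<lambda>n. complex_of_real (1 / w (n + 1))", OF le1 that] by blast
    have leW: "cmod (complex_of_real (w n)) \<le> W" for n using w[of n] by simp
    show "l2 (\<lambda>n. complex_of_real (w n) * E n)
        \<and> sqnorm (\<lambda>n. complex_of_real (w n) * E n) \<le> W\<^sup>2 * sqnorm E" if "l2 E" for E
      using l2_mult[where m = "\<lambda>n. complex_of_real (w n)", OF leW that] by blast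
    show "\<forall>n. complex_of_real (w (n + 1)) * E (n + 1) = \<rho> n * (complex_of_real (w n) * E n) + u n"
      if "\<forall>n. E (n + 1) = \<rho>' n * E n + complex_of_real (1 / w (n + 1)) * u n" for u E
    proof
      fix n
      have "w (n + 1) > 0" using w(1)[of "n + 1"] by simp
      then show "complex_of_real (w (n + 1)) * E (n + 1) = \<rho> n * (complex_of_real (w n) * E n) + u n"
        using that[rule_format, of n] by (simp add: \<rho>'_def field_simps)
    qed
  qed
qed

lemma eventually_contracting_backward_solvable:
  fixes \<rho> :: "int \<Rightarrow> complex"
  assumes B: "\<And>n. cmod (\<rho> n) \<le> B" and r: "r < 1" and M: "\<And>n. \<bar>n\<bar> \<ge> M \<Longrightarrow> cmod (\<rho> n) \<le> r"
  shows "bounded_solvable (\<lambda>u D. \<forall>n. D n = \<rho> n * D (n + 1) + u n)"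
proof -
  have "bounded_solvable (\<lambda>u E. \<forall>m. E (m + 1) = \<rho> (- m - 1) * E m + u m)"
    by (rule eventually_contracting_recurrence_solvable[of _ B r "M + 1"]) (use B r M in auto)
  then show ?thesis
  proof (rule bounded_solvable_transform[where f = "\<lambda>u m. u (- m - 1)" and g = "\<lambda>E n. E (- n)"
        and A = 1 and B = 1])
    show "l2 (\<lambda>m. u (- m - 1)) \<and> sqnorm (\<lambda>m. u (- m - 1)) \<le> 1 * sqnorm u" if "l2 u" for u
      using l2_reindex[of "\<lambda>m. - m - 1" u] that by (simp add: inj_on_def)
    show "l2 (\<lambda>n. E (- n)) \<and> sqnorm (\<lambda>n. E (- n)) \<le> 1 * sqnorm E" if "l2 E" for E
      using l2_reflect[OF that] sqnorm_reflect_le[OF that] by simp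
    show "\<forall>n. E (- n) = \<rho> n * E (- (n + 1)) + u n"
      if "\<forall>m. E (m + 1) = \<rho> (- m - 1) * E m + u (- m - 1)" for u E
    proof
      fix n show "E (- n) = \<rho> n * E (- (n + 1)) + u n" using that[rule_format, of "- n - 1"] by simp
    qed
  qed
qed

lemma eventually_expanding_recurrence_solvable:
  fixes \<rho> :: "int \<Rightarrow> complex"
  assumes nz: "\<And>n. \<rho> n \<noteq> 0" and B: "\<And>n. cmod (1 / \<rho> n) \<le> B" and r: "r < 1"
    and M: "\<And>n. \<bar>n\<bar> \<ge> M \<Longrightarrow> cmod (1 / \<rho> n) \<le> r"
  shows "bounded_solvable (\<lambda>u D. \<forall>n. D (n + 1) = \<rho> n * D n + u n)"
  using eventually_contracting_backward_solvable[OF B r M]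
proof (rule bounded_solvable_transform[where f = "\<lambda>u n. - (1 / \<rho> n) * u n" and g = "\<lambda>D. D"
      and A = "B\<^sup>2" and B = 1])
  show "l2 (\<lambda>n. - (1 / \<rho> n) * u n) \<and> sqnorm (\<lambda>n. - (1 / \<rho> n) * u n) \<le> B\<^sup>2 * sqnorm u"
    if "l2 u" for u
    using l2_mult[of "\<lambda>n. - (1 / \<rho> n)" B u] B that by simp
  show "\<forall>n. D (n + 1) = \<rho> n * D n + u n" if "\<forall>n. D n = 1 / \<rho> n * D (n + 1) + - (1 / \<rho> n) * u n" for u D
  proof
    fix n show "D (n + 1) = \<rho> n * D n + u n"
      using that[rule_format, of n] nz[of n] by (simp add: field_simps)
  qed
  show "l2 D \<and> sqnorm D \<le> 1 * sqnorm D" if "l2 D" for D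
    using that by simp
qed

lemma hyperbolic_ends_recurrence_solvable:
  fixes \<rho> :: "int \<Rightarrow> complex"
  assumes m: "m > 0" "\<And>n. m \<le> cmod (\<rho> n)" and B: "\<And>n. cmod (\<rho> n) \<le> B"
    and ends: "(r < 1 \<and> (\<forall>n. \<bar>n\<bar> \<ge> M \<longrightarrow> cmod (\<rho> n) \<le> r))
             \<or> (R > 1 \<and> (\<forall>n. \<bar>n\<bar> \<ge> M \<longrightarrow> cmod (\<rho> n) \<ge> R))"
  shows "bounded_solvable (\<lambda>u D. \<forall>n. D (n + 1) = \<rho> n * D n + u n)"
  using ends
proof
  assume "r < 1 \<and> (\<forall>n. \<bar>n\<bar> \<ge> M \<longrightarrow> cmod (\<rho> n) \<le> r)"
  then show ?thesis using eventually_contracting_recurrence_solvable[where \<rho> = \<rho>, OF B] by blast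
next
  assume R: "R > 1 \<and> (\<forall>n. \<bar>n\<bar> \<ge> M \<longrightarrow> cmod (\<rho> n) \<ge> R)"
  have nz: "\<rho> n \<noteq> 0" for n using m(2)[of n] m(1) by auto
  show ?thesis
  proof (rule eventually_expanding_recurrence_solvable[where \<rho> = \<rho>, OF nz])
    show "cmod (1 / \<rho> n) \<le> 1 / m" for n
      using m nz[of n] by (simp add: norm_divide frac_le)
    show "1 / R < 1" using R by simp
    show "cmod (1 / \<rho> n) \<le> 1 / R" if "\<bar>n\<bar> \<ge> M" for n
      using R that nz[of n] by (simp add: norm_divide frac_le)
  qed
qed

definition prod_sol :: "(int \<Rightarrow> complex) \<Rightarrow> int \<Rightarrow> complex" where
  "prod_sol \<rho> n = prod \<rho> {0..<n} / prod \<rho> {n..<0}"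

lemma prod_sol_0 [simp]: "prod_sol \<rho> 0 = 1"
  by (simp add: prod_sol_def)

lemma prod_sol_step:
  assumes "\<And>n. \<rho> n \<noteq> 0"
  shows "prod_sol \<rho> (n + 1) = \<rho> n * prod_sol \<rho> n"
proof (cases "0 \<le> n")
  case True
  then have "{0..<n + 1} = insert n {0..<n}" "{n + 1..<0} = {}" "{n..<0} = {}" by auto
  then show ?thesis by (simp add: prod_sol_def)
next
  case False
  then have "{n..<0} = insert n {n + 1..<0}" "{0..<n + 1} = {}" "{0..<n} = {}" by auto
  moreover have "prod \<rho> {n + 1..<0} \<noteq> 0" using assms by simp
  ultimately show ?thesis using assms[of n] by (simp add: prod_sol_def)
qed

lemma prod_sol_unique:
  assumes nz: "\<And>n. \<rho> n \<noteq> 0" and f: "\<And>n. f (n + 1) = \<rho> n * f n"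
  shows "f n = f 0 * prod_sol \<rho> n"
proof (induction n rule: int_induct[where k = 0])
  case (step1 i)
  then show ?case by (simp add: f prod_sol_step[where \<rho> = \<rho>, OF nz])
next
  case (step2 i)
  have "\<rho> (i - 1) * f (i - 1) = f 0 * prod_sol \<rho> i"
    using step2 f[of "i - 1"] by simp
  also have "\<dots> = \<rho> (i - 1) * (f 0 * prod_sol \<rho> (i - 1))"
    using prod_sol_step[where \<rho> = \<rho>, OF nz, of "i - 1"] by simp
  finally show ?case using nz[of "i - 1"] by (metis mult_left_cancel)
qed simp

lemma l2_first_order_vanishes_left:
  assumes l: "l2 f" and f: "\<And>n. f (n + 1) = \<rho> n * f n" and \<rho>: "\<And>n. n \<le> M \<Longrightarrow> cmod (\<rho> n) \<le> 1"
  shows "f n = 0"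
proof -
  have low: "f n = 0" if n: "n \<le> M + 1" for n
  proof -
    have mono: "cmod (f n) \<le> cmod (f (n - int k))" for k
    proof (induction k)
      case (Suc k)
      have "cmod (f (n - int k)) = cmod (\<rho> (n - int (Suc k))) * cmod (f (n - int (Suc k)))"
        using f[of "n - int (Suc k)"] by (simp add: norm_mult)
      also have "\<dots> \<le> cmod (f (n - int (Suc k)))"
        using \<rho>[of "n - int (Suc k)"] n by (simp add: mult_left_le_one_le)
      finally show ?case using Suc by simp
    qed simp
    have "(cmod (f n))\<^sup>2 \<le> 0"
      by (rule LIMSEQ_le_const[OF l2_tendsto_zero_down[OF l, of n]]) (auto intro!: power_mono mono)
    then show ?thesis by simp
  qed
  show ?thesis
  proof (induction n rule: int_induct[where k = M])
    case (step1 i) then show ?case by (simp add: f)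
  qed (auto intro: low)
qed

lemma l2_first_order_vanishes_right:
  assumes l: "l2 f" and f: "\<And>n. f (n + 1) = \<rho> n * f n" and nz: "\<And>n. \<rho> n \<noteq> 0"
    and \<rho>: "\<And>n. n \<ge> M \<Longrightarrow> cmod (\<rho> n) \<ge> 1"
  shows "f n = 0"
proof -
  have high: "f n = 0" if n: "n \<ge> M" for n
  proof -
    have mono: "cmod (f n) \<le> cmod (f (n + int k))" for k
    proof (induction k)
      case (Suc k)
      have "cmod (f (n + int k)) \<le> cmod (\<rho> (n + int k)) * cmod (f (n + int k))"
        using \<rho>[of "n + int k"] n by (simp add: mult_le_cancel_right1)
      also have "\<dots> = cmod (f (n + int (Suc k)))"
        using f[of "n + int k"] by (simp add: norm_mult add_ac)
      finally show ?case using Suc by simp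
    qed simp
    have "(cmod (f n))\<^sup>2 \<le> 0"
      by (rule LIMSEQ_le_const[OF l2_tendsto_zero_up[OF l, of n]]) (auto intro!: power_mono mono)
    then show ?thesis by simp
  qed
  show ?thesis
  proof (induction n rule: int_induct[where k = M])
    case (step2 i)
    have "\<rho> (i - 1) * f (i - 1) = 0" using f[of "i - 1"] step2 by simp
    then show ?case using nz[of "i - 1"] by simp
  qed (auto intro: high)
qed

lemma sum_sq_le_geometric:
  fixes f :: "int \<Rightarrow> complex"
  assumes f: "\<And>k. cmod (f (M + int k)) \<le> C * \<mu> ^ k" and \<mu>: "0 \<le> \<mu>" "\<mu> < 1"
    and G: "finite G" "G \<subseteq> {M..}"
  shows "(\<Sum>n\<in>G. (cmod (f n))\<^sup>2) \<le> C\<^sup>2 / (1 - \<mu>\<^sup>2)"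
proof -
  define H where "H = (\<lambda>n. nat (n - M)) ` G"
  have GH: "G = (\<lambda>k. M + int k) ` H"
    unfolding H_def using G(2) by (auto simp: image_iff intro!: bexI[where x = "_"])
  have "(\<Sum>n\<in>G. (cmod (f n))\<^sup>2) = (\<Sum>k\<in>H. (cmod (f (M + int k)))\<^sup>2)"
    unfolding GH by (simp add: sum.reindex inj_on_def)
  also have "\<dots> \<le> (\<Sum>k\<in>H. C\<^sup>2 * (\<mu>\<^sup>2) ^ k)"
  proof (rule sum_mono)
    fix k
    have "(cmod (f (M + int k)))\<^sup>2 \<le> (C * \<mu> ^ k)\<^sup>2" by (rule power_mono[OF f]) simp
    then show "(cmod (f (M + int k)))\<^sup>2 \<le> C\<^sup>2 * (\<mu>\<^sup>2) ^ k"
      by (simp add: power_mult_distrib power_mult[symmetric] mult.commute)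
  qed
  also have "\<dots> \<le> (\<Sum>k. C\<^sup>2 * (\<mu>\<^sup>2) ^ k)"
    by (rule sum_le_suminf)
      (use \<mu> G H_def in \<open>auto intro!: summable_mult simp: abs_square_less_1\<close>)
  also have "\<dots> = C\<^sup>2 / (1 - \<mu>\<^sup>2)"
    using \<mu> by (simp add: suminf_mult suminf_geometric abs_square_less_1 divide_inverse)
  finally show ?thesis .
qed

lemma l2_if_geometric_decay:
  fixes f :: "int \<Rightarrow> complex"
  assumes up: "\<And>k. cmod (f (M + int k)) \<le> C * \<mu> ^ k"
    and down: "\<And>k. cmod (f (- M - int k)) \<le> C * \<mu> ^ k"
    and M: "M \<ge> 0" and \<mu>: "0 \<le> \<mu>" "\<mu> < 1"
  shows "l2 f"
proof (rule l2_sqnorm_leI(1))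
  fix F :: "int set" assume F: "finite F"
  have split: "F = (F \<inter> {M..}) \<union> (F \<inter> {..<-M}) \<union> (F \<inter> {-M..<M})" by auto
  have "(\<Sum>n\<in>F. (cmod (f n))\<^sup>2) = (\<Sum>n\<in>F \<inter> {M..}. (cmod (f n))\<^sup>2)
      + (\<Sum>n\<in>F \<inter> {..<-M}. (cmod (f n))\<^sup>2) + (\<Sum>n\<in>F \<inter> {-M..<M}. (cmod (f n))\<^sup>2)"
    by (subst split, subst sum.union_disjoint, use F M in auto, subst sum.union_disjoint, use M in auto)
  also have "(\<Sum>n\<in>F \<inter> {M..}. (cmod (f n))\<^sup>2) \<le> C\<^sup>2 / (1 - \<mu>\<^sup>2)"
    by (rule sum_sq_le_geometric[OF up \<mu>]) (use F in auto)
  also have "(\<Sum>n\<in>F \<inter> {..<-M}. (cmod (f n))\<^sup>2) \<le> C\<^sup>2 / (1 - \<mu>\<^sup>2)"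
  proof -
    have "(\<Sum>n\<in>F \<inter> {..<-M}. (cmod (f n))\<^sup>2) = (\<Sum>n\<in>uminus ` (F \<inter> {..<-M}). (cmod (f (- n)))\<^sup>2)"
      by (simp add: sum.reindex inj_on_def)
    also have "\<dots> \<le> C\<^sup>2 / (1 - \<mu>\<^sup>2)"
      by (rule sum_sq_le_geometric[where f = "\<lambda>n. f (- n)" and M = M, OF _ \<mu>])
        (use F down in \<open>auto simp: algebra_simps\<close>)
    finally show ?thesis .
  qed
  also have "(\<Sum>n\<in>F \<inter> {-M..<M}. (cmod (f n))\<^sup>2) \<le> (\<Sum>n\<in>{-M..<M}. (cmod (f n))\<^sup>2)"
    by (rule sum_mono2) auto
  finally show "(\<Sum>n\<in>F. (cmod (f n))\<^sup>2)
      \<le> C\<^sup>2 / (1 - \<mu>\<^sup>2) + C\<^sup>2 / (1 - \<mu>\<^sup>2) + (\<Sum>n\<in>{-M..<M}. (cmod (f n))\<^sup>2)"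
    by simp
qed

lemma l2_prod_sol:
  assumes nz: "\<And>n. \<rho> n \<noteq> 0" and M: "M \<ge> 0"
    and r: "0 \<le> r" "r < 1" "\<And>n. n \<ge> M \<Longrightarrow> cmod (\<rho> n) \<le> r"
    and R: "R > 1" "\<And>n. n \<le> - M \<Longrightarrow> cmod (\<rho> n) \<ge> R"
  shows "l2 (prod_sol \<rho>)"
proof -
  define \<mu> where "\<mu> = max r (1 / R)"
  define C where "C = max (cmod (prod_sol \<rho> M)) (cmod (prod_sol \<rho> (- M)))"
  have \<mu>: "0 \<le> \<mu>" "\<mu> < 1" "r \<le> \<mu>" "1 / R \<le> \<mu>" using r R unfolding \<mu>_def by auto
  have C: "C \<ge> 0" unfolding C_def by (simp add: le_max_iff_disj)
  have up: "cmod (prod_sol \<rho> (M + int k)) \<le> C * \<mu> ^ k" for k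
  proof (induction k)
    case (Suc k)
    have "cmod (prod_sol \<rho> (M + int (Suc k))) = cmod (\<rho> (M + int k)) * cmod (prod_sol \<rho> (M + int k))"
      using prod_sol_step[where \<rho> = \<rho>, OF nz, of "M + int k"] by (simp add: add_ac norm_mult)
    also have "\<dots> \<le> \<mu> * (C * \<mu> ^ k)"
      by (rule mult_mono) (use r(3)[of "M + int k"] \<mu> Suc in auto)
    finally show ?case by (simp add: mult_ac)
  qed (simp add: C_def)
  have down: "cmod (prod_sol \<rho> (- M - int k)) \<le> C * \<mu> ^ k" for k
  proof (induction k)
    case (Suc k)
    have step: "prod_sol \<rho> (- M - int k) = \<rho> (- M - int (Suc k)) * prod_sol \<rho> (- M - int (Suc k))"
      using prod_sol_step[where \<rho> = \<rho>, OF nz, of "- M - int (Suc k)"] by simp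
    have R_le: "R \<le> cmod (\<rho> (- M - int (Suc k)))" by (rule R(2)) simp
    have "cmod (prod_sol \<rho> (- M - int (Suc k)))
        = cmod (prod_sol \<rho> (- M - int k)) / cmod (\<rho> (- M - int (Suc k)))"
      using nz[of "- M - int (Suc k)"] unfolding step by (simp add: norm_mult)
    also have "\<dots> \<le> cmod (prod_sol \<rho> (- M - int k)) / R"
      by (rule divide_left_mono) (use R_le R nz[of "- M - int (Suc k)"] in auto)
    also have "\<dots> = cmod (prod_sol \<rho> (- M - int k)) * (1 / R)" by simp
    also have "\<dots> \<le> (C * \<mu> ^ k) * \<mu>"
      by (rule mult_mono) (use Suc \<mu> C R in auto)
    finally show ?case by (simp add: mult_ac)
  qed (simp add: C_def)
  show ?thesis by (rule l2_if_geometric_decay[OF up down M \<mu>(1,2)])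
qed

section \<open>Sequences that are constant near \<open>\<plusminus>\<infinity>\<close>\<close>

definition const_ends :: "(int \<Rightarrow> 'a) \<Rightarrow> bool" where
  "const_ends f \<longleftrightarrow> (\<exists>x y K. (\<forall>n. n \<ge> K \<longrightarrow> f n = x) \<and> (\<forall>n. n \<le> - K \<longrightarrow> f n = y))"

lemma const_endsI: "(\<And>n. n \<ge> K \<Longrightarrow> f n = x) \<Longrightarrow> (\<And>n. n \<le> - K \<Longrightarrow> f n = y) \<Longrightarrow> const_ends f"
  unfolding const_ends_def by blast

lemma const_ends_const: "const_ends (\<lambda>n. a)"
  unfolding const_ends_def by auto

lemma const_ends_comp2:
  assumes "const_ends f" "const_ends g"
  shows "const_ends (\<lambda>n. h (f n) (g n))"
proof -
  obtain x1 y1 K1 where 1: "\<And>n. n \<ge> K1 \<Longrightarrow> f n = x1" "\<And>n. n \<le> - K1 \<Longrightarrow> f n = y1"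
    using assms(1) unfolding const_ends_def by blast
  obtain x2 y2 K2 where 2: "\<And>n. n \<ge> K2 \<Longrightarrow> g n = x2" "\<And>n. n \<le> - K2 \<Longrightarrow> g n = y2"
    using assms(2) unfolding const_ends_def by blast
  show ?thesis by (rule const_endsI[where K = "max K1 K2"]) (use 1 2 in auto)
qed

lemma const_ends_comp: "const_ends f \<Longrightarrow> const_ends (\<lambda>n. h (f n))"
  using const_ends_comp2[of f f "\<lambda>a b. h a"] by simp

lemma const_ends_shift:
  assumes "const_ends f"
  shows "const_ends (\<lambda>n. f (n + k))"
proof -
  obtain x y K where "\<And>n. n \<ge> K \<Longrightarrow> f n = x" "\<And>n. n \<le> - K \<Longrightarrow> f n = y"
    using assms unfolding const_ends_def by blast
  then show ?thesis by (intro const_endsI[where K = "\<bar>K\<bar> + \<bar>k\<bar>"]) auto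
qed

lemma const_ends_finite_range:
  assumes "const_ends f"
  shows "finite (range f)"
proof -
  obtain x y K where K: "\<And>n. n \<ge> K \<Longrightarrow> f n = x" "\<And>n. n \<le> - K \<Longrightarrow> f n = y"
    using assms unfolding const_ends_def by blast
  have "range f \<subseteq> f ` {-K..K} \<union> {x, y}"
  proof
    fix z assume "z \<in> range f"
    then obtain n where n: "z = f n" by auto
    show "z \<in> f ` {-K..K} \<union> {x, y}"
      by (cases "n \<ge> K \<or> n \<le> - K") (use K n in auto)
  qed
  then show ?thesis by (rule finite_subset) auto
qed

lemma const_ends_bounded:
  fixes f :: "int \<Rightarrow> 'a :: real_normed_vector"
  assumes "const_ends f"
  obtains B where "\<And>n. norm (f n) \<le> B"
proof
  fix n
  show "norm (f n) \<le> Max (range (\<lambda>n. norm (f n)))"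
    using const_ends_finite_range[OF const_ends_comp[OF assms, of norm]] by (intro Max_ge) auto
qed

lemma l2_mult_const_ends:
  fixes h :: "int \<Rightarrow> real"
  assumes "const_ends h" "l2 f"
  shows "l2 (\<lambda>n. complex_of_real (h n) * f n)"
proof -
  obtain B where "\<And>n. norm (h n) \<le> B" using const_ends_bounded[OF assms(1)] by blast
  then have "cmod (complex_of_real (h n)) \<le> B" for n by simp
  then show ?thesis by (rule l2_mult(1)[OF _ assms(2)])
qed

lemma const_ends_pos_lower_bound:
  fixes f :: "int \<Rightarrow> real"
  assumes "const_ends f" "\<And>n. f n > 0"
  obtains m where "m > 0" "\<And>n. m \<le> f n"
proof
  show "0 < Min (range f)" using assms const_ends_finite_range by (subst Min_gr_iff) auto
  fix n show "Min (range f) \<le> f n" using assms const_ends_finite_range by (intro Min_le) auto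
qed

definition bounded_family :: "('a \<Rightarrow> bool) \<Rightarrow> ('a \<Rightarrow> real) \<Rightarrow> ('a \<Rightarrow> int \<Rightarrow> complex) \<Rightarrow> bool" where
  "bounded_family P t \<Phi> \<longleftrightarrow> (\<forall>x. P x \<longrightarrow> l2 (\<Phi> x)) \<and> (\<exists>K. \<forall>x. P x \<longrightarrow> sqnorm (\<Phi> x) \<le> K * t x)"

lemma bounded_familyI:
  "(\<And>x. P x \<Longrightarrow> l2 (\<Phi> x) \<and> sqnorm (\<Phi> x) \<le> K * t x) \<Longrightarrow> bounded_family P t \<Phi>"
  unfolding bounded_family_def by blast

lemma bounded_family_l2: "bounded_family P t \<Phi> \<Longrightarrow> P x \<Longrightarrow> l2 (\<Phi> x)"
  unfolding bounded_family_def by blast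

lemma bounded_familyE:
  assumes "bounded_family P t \<Phi>" "\<And>x. P x \<Longrightarrow> t x \<ge> 0"
  obtains K where "K \<ge> 0" "\<And>x. P x \<Longrightarrow> sqnorm (\<Phi> x) \<le> K * t x"
proof -
  obtain K where K: "\<And>x. P x \<Longrightarrow> sqnorm (\<Phi> x) \<le> K * t x"
    using assms(1) unfolding bounded_family_def by blast
  have "sqnorm (\<Phi> x) \<le> max K 0 * t x" if "P x" for x
    using K[OF that] mult_right_mono[of K "max K 0" "t x"] assms(2)[OF that] by simp
  then show thesis by (intro that[of "max K 0"]) auto
qed

lemma bounded_family_add:
  assumes "bounded_family P t f" "bounded_family P t g" "\<And>x. P x \<Longrightarrow> t x \<ge> 0"
  shows "bounded_family P t (\<lambda>x n. f x n + g x n)"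
proof -
  obtain A where A: "\<And>x. P x \<Longrightarrow> sqnorm (f x) \<le> A * t x"
    using bounded_familyE[OF assms(1,3)] by blast
  obtain B where B: "\<And>x. P x \<Longrightarrow> sqnorm (g x) \<le> B * t x"
    using bounded_familyE[OF assms(2,3)] by blast
  show ?thesis
  proof (rule bounded_familyI[where K = "2 * A + 2 * B"])
    fix x assume x: "P x"
    note fg = bounded_family_l2[OF assms(1) x] bounded_family_l2[OF assms(2) x]
    show "l2 (\<lambda>n. f x n + g x n) \<and> sqnorm (\<lambda>n. f x n + g x n) \<le> (2 * A + 2 * B) * t x"
      using l2_add[OF fg] A[OF x] B[OF x] by (simp add: algebra_simps)
  qed
qed

lemma bounded_family_mult:
  fixes h :: "int \<Rightarrow> real"
  assumes "const_ends h" "bounded_family P t f" "\<And>x. P x \<Longrightarrow> t x \<ge> 0"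
  shows "bounded_family P t (\<lambda>x n. complex_of_real (h n) * f x n)"
proof -
  obtain B where B: "\<And>n. cmod (complex_of_real (h n)) \<le> B"
    using const_ends_bounded[OF assms(1)] by (metis norm_of_real real_norm_def)
  obtain A where A: "A \<ge> 0" "\<And>x. P x \<Longrightarrow> sqnorm (f x) \<le> A * t x"
    using bounded_familyE[OF assms(2,3)] by blast
  show ?thesis
  proof (rule bounded_familyI[where K = "B\<^sup>2 * A"])
    fix x assume x: "P x"
    note hf = l2_mult[where m = "\<lambda>n. complex_of_real (h n)", OF B bounded_family_l2[OF assms(2) x]]
    have "B\<^sup>2 * sqnorm (f x) \<le> B\<^sup>2 * (A * t x)" using A(2)[OF x] by (simp add: mult_left_mono)
    then show "l2 (\<lambda>n. complex_of_real (h n) * f x n)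
        \<and> sqnorm (\<lambda>n. complex_of_real (h n) * f x n) \<le> B\<^sup>2 * A * t x"
      using hf by (simp add: mult.assoc)
  qed
qed

lemma bounded_family_shift:
  assumes "bounded_family P t f" "\<And>x. P x \<Longrightarrow> t x \<ge> 0"
  shows "bounded_family P t (\<lambda>x n. f x (n + k))"
proof -
  obtain A where A: "\<And>x. P x \<Longrightarrow> sqnorm (f x) \<le> A * t x"
    using bounded_familyE[OF assms] by blast
  show ?thesis
    using l2_shift[OF bounded_family_l2[OF assms(1)]] sqnorm_shift_le[OF bounded_family_l2[OF assms(1)]] A
    by (intro bounded_familyI[where K = A]) (meson order_trans)
qed

lemma bounded_family_solve:
  assumes "bounded_solvable R" "bounded_family P t f" "\<And>x. P x \<Longrightarrow> t x \<ge> 0"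
  obtains \<Phi> where "bounded_family P t \<Phi>" "\<And>x. P x \<Longrightarrow> R (f x) (\<Phi> x)"
proof -
  obtain K where K: "K \<ge> 0" "\<And>u. l2 u \<Longrightarrow> \<exists>y. l2 y \<and> sqnorm y \<le> K * sqnorm u \<and> R u y"
    using assms(1) by (elim bounded_solvableE) blast
  obtain A where A: "A \<ge> 0" "\<And>x. P x \<Longrightarrow> sqnorm (f x) \<le> A * t x"
    using bounded_familyE[OF assms(2,3)] by blast
  define \<Phi> where "\<Phi> x = (SOME y. l2 y \<and> sqnorm y \<le> K * sqnorm (f x) \<and> R (f x) y)" for x
  have \<Phi>: "l2 (\<Phi> x) \<and> sqnorm (\<Phi> x) \<le> K * sqnorm (f x) \<and> R (f x) (\<Phi> x)" if "P x" for x
    unfolding \<Phi>_def by (rule someI_ex[OF K(2)[OF bounded_family_l2[OF assms(2) that]]])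
  show thesis
  proof (rule that)
    show "bounded_family P t \<Phi>"
    proof (rule bounded_familyI[where K = "K * A"])
      fix x assume x: "P x"
      have "K * sqnorm (f x) \<le> K * (A * t x)" by (rule mult_left_mono[OF A(2)[OF x] K(1)])
      then show "l2 (\<Phi> x) \<and> sqnorm (\<Phi> x) \<le> K * A * t x" using \<Phi>[OF x] by (simp add: mult.assoc)
    qed
    show "R (f x) (\<Phi> x)" if "P x" for x using \<Phi>[OF that] by blast
  qed
qed

type_synonym seq_triple = "(int \<Rightarrow> complex) \<times> (int \<Rightarrow> complex) \<times> (int \<Rightarrow> complex)"

definition triple_l2 :: "seq_triple \<Rightarrow> bool" where
  "triple_l2 F \<longleftrightarrow> l2 (fst F) \<and> l2 (fst (snd F)) \<and> l2 (snd (snd F))"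

definition triple_sqnorm :: "seq_triple \<Rightarrow> real" where
  "triple_sqnorm F = sqnorm (fst F) + sqnorm (fst (snd F)) + sqnorm (snd (snd F))"

lemma triple_sqnorm_nonneg: "triple_sqnorm F \<ge> 0"
  unfolding triple_sqnorm_def by (simp add: sqnorm_nonneg add_nonneg_nonneg)

lemma bounded_family_triple_components:
  "bounded_family triple_l2 triple_sqnorm fst" "bounded_family triple_l2 triple_sqnorm (\<lambda>F. fst (snd F))"
  "bounded_family triple_l2 triple_sqnorm (\<lambda>F. snd (snd F))"
  by (auto intro!: bounded_familyI[where K = 1] simp: triple_l2_def triple_sqnorm_def sqnorm_nonneg)

section \<open>One off-diagonal block\<close>

lemma halves_of_sum_and_diff:
  fixes x y s d \<alpha> :: complex
  assumes "x + y = \<alpha> * s" "x - y = \<alpha> * d"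
  shows "x = \<alpha> * (complex_of_real (1 / 2) * s + complex_of_real (1 / 2) * d)"
    and "y = \<alpha> * (complex_of_real (1 / 2) * s + complex_of_real (- 1 / 2) * d)"
proof -
  have "x = ((x + y) + (x - y)) / 2" "y = ((x + y) - (x - y)) / 2" by simp_all
  then show "x = \<alpha> * (complex_of_real (1 / 2) * s + complex_of_real (1 / 2) * d)"
    and "y = \<alpha> * (complex_of_real (1 / 2) * s + complex_of_real (- 1 / 2) * d)"
    unfolding assms by (simp_all add: field_simps)
qed

definition pos_root :: "real \<Rightarrow> real \<Rightarrow> real" where
  "pos_root p q = (p + sqrt (p\<^sup>2 + 4 * q)) / 2"

lemma pos_root_quadratic:
  assumes "p > 0" "q > 0"
  shows "pos_root p q > 0" "(pos_root p q)\<^sup>2 = p * pos_root p q + q"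
proof -
  have s: "(sqrt (p\<^sup>2 + 4 * q))\<^sup>2 = p\<^sup>2 + 4 * q" using assms by simp
  show "pos_root p q > 0" unfolding pos_root_def using assms by (simp add: add_pos_nonneg)
  show "(pos_root p q)\<^sup>2 = p * pos_root p q + q"
    unfolding pos_root_def using s by (simp add: power2_eq_square field_simps)
qed

lemma quadratic_root_gt_q:
  fixes z p q :: real
  assumes "z > 0" "p > 0" "q > 0" "z\<^sup>2 = p * z + q" "q < p + 1"
  shows "q < z"
proof (rule ccontr)
  assume "\<not> q < z" then have zq: "z \<le> q" by simp
  have qz: "q = z * (z - p)" using assms(4) by (simp add: power2_eq_square algebra_simps)
  also have "\<dots> \<le> q * (z - p)"
  proof (cases "z - p \<ge> 0")
    case True then show ?thesis using zq by (simp add: mult_right_mono)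
  next
    case False
    hence "z * (z - p) < 0" using assms(1) by (simp add: mult_pos_neg)
    then show ?thesis using qz assms(3) by linarith
  qed
  finally have "q * 1 \<le> q * (z - p)" by simp
  hence "1 \<le> z - p" using assms(3) by (simp add: mult_le_cancel_left_pos)
  thus False using zq assms by linarith
qed

lemma quadratic_root_gt_1:
  fixes z p q :: real
  assumes "z > 0" "p > 0" "q > 0" "z\<^sup>2 = p * z + q" "p + q > 1"
  shows "z > 1"
proof (rule ccontr)
  assume "\<not> z > 1" hence z1: "z \<le> 1" by simp
  have "z\<^sup>2 \<le> z" using z1 assms(1) by (simp add: power2_eq_square mult_left_le_one_le)
  hence "p * z + q \<le> z" using assms(4) by simp
  hence "q \<le> z * (1 - p)" by (simp add: algebra_simps)
  moreover have "z * (1 - p) \<le> max 0 (1 - p)"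
  proof (cases "1 - p \<ge> 0")
    case True then show ?thesis using z1 assms(1) mult_left_le_one_le[of "1-p" z] by (simp add: max_def)
  next
    case False then show ?thesis using assms(1) mult_nonneg_nonpos[of z "1-p"] by (simp add: max_def)
  qed
  ultimately show False using assms by (auto simp: max_def split: if_splits)
qed

lemma quadratic_root_lt_1:
  fixes z p q :: real
  assumes "z > 0" "p > 0" "q > 0" "z\<^sup>2 = p * z + q" "p + q < 1"
  shows "z < 1"
proof (rule ccontr)
  assume "\<not> z < 1" hence z1: "z \<ge> 1" by simp
  have "z \<le> z\<^sup>2" using z1 by (simp add: power2_eq_square)
  hence "z \<le> p * z + q" using assms(4) by simp
  also have "\<dots> \<le> p * z + q * z" using z1 assms by simp
  finally have "z * 1 \<le> z * (p + q)" by (simp add: algebra_simps)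
  hence "1 \<le> p + q" using assms(1) by (simp add: mult_le_cancel_left_pos)
  thus False using assms by simp
qed

lemma bulk_coefficient_ineqs:
  fixes b e :: real
  assumes "b > 0" "e > 0"
  shows "e / (2 * b) < e * e / (2 * b * b) + 1"
    and "e > b \<Longrightarrow> e * e / (2 * b * b) + e / (2 * b) > 1"
    and "e < b \<Longrightarrow> e * e / (2 * b * b) + e / (2 * b) < 1"
proof -
  define t where "t = e / b"
  have p: "e * e / (2 * b * b) = t * t / 2" and q: "e / (2 * b) = t / 2" unfolding t_def using assms by auto
  have t0: "t > 0" unfolding t_def using assms by simp
  show "e / (2 * b) < e * e / (2 * b * b) + 1" unfolding p q
    using zero_le_power2[of "t - 1/2"] by (simp add: power2_eq_square algebra_simps)
  show "e > b \<Longrightarrow> e * e / (2 * b * b) + e / (2 * b) > 1"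
  proof -
    assume "e > b" hence "t > 1" unfolding t_def using assms by simp
    hence "t * t > 1 * 1" using mult_strict_mono[of 1 t 1 t] by simp
    thus ?thesis unfolding p q using \<open>t > 1\<close> by simp
  qed
  show "e < b \<Longrightarrow> e * e / (2 * b * b) + e / (2 * b) < 1"
  proof -
    assume "e < b" hence "t < 1" unfolding t_def using assms by simp
    hence "t * t < 1 * 1" using t0 by (intro mult_strict_mono) auto
    thus ?thesis unfolding p q using \<open>t < 1\<close> by simp
  qed
qed

text \<open>The coefficients of one off-diagonal block of \<open>H_II(0)\<close>: \<open>b\<close> couples sites within a cell,
  \<open>c\<close> and \<open>d\<close> couple cell \<open>n\<close> to cells \<open>n + 1\<close> and \<open>n + 2\<close>. They take the bulk values \<open>bL\<close> and
  \<open>eL = bL + \<delta>\<close> far to the left, \<open>bR\<close> and \<open>eR\<close> far to the right.\<close>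

locale junction =
  fixes b c d :: "int \<Rightarrow> real" and bL eL bR eR :: real and N :: int
  assumes b_pos: "\<And>n. b n > 0" and c_pos: "\<And>n. c n > 0" and d_pos: "\<And>n. d n > 0"
    and N_nonneg: "N \<ge> 0"
    and left: "\<And>n. n \<le> - N \<Longrightarrow> b n = bL \<and> c n = eL \<and> d n = eL"
    and right: "\<And>n. n \<ge> N \<Longrightarrow> b n = bR \<and> c n = eR \<and> d n = eR"
begin

lemma bL_pos: "bL > 0" and eL_pos: "eL > 0" and bR_pos: "bR > 0" and eR_pos: "eR > 0"
  using left[of "- N"] right[of N] b_pos[of N] c_pos[of N] b_pos[of "- N"] c_pos[of "- N"] by auto

lemma const_ends_b: "const_ends b" and const_ends_c: "const_ends c" and const_ends_d: "const_ends d"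
  using left right by (auto intro: const_endsI[where K = N])

text \<open>On the kernel, \<open>S = w4 + w6\<close> satisfies \<open>S (n + 2) = pS n * S (n + 1) + qS n * S n\<close>.\<close>

definition pS :: "int \<Rightarrow> real" where "pS n = c n * d n / (2 * b n * b (n + 2))"
definition qS :: "int \<Rightarrow> real" where "qS n = d n / (2 * b (n + 2))"

definition pL where "pL = eL * eL / (2 * bL * bL)"
definition qL where "qL = eL / (2 * bL)"
definition pR where "pR = eR * eR / (2 * bR * bR)"
definition qR where "qR = eR / (2 * bR)"

lemma pS_pos: "pS n > 0" unfolding pS_def using b_pos c_pos d_pos by simp
lemma qS_pos: "qS n > 0" unfolding qS_def using b_pos d_pos by simp
lemma pL_pos: "pL > 0" and qL_pos: "qL > 0" and pR_pos: "pR > 0" and qR_pos: "qR > 0"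
  unfolding pL_def qL_def pR_def qR_def using bL_pos eL_pos bR_pos eR_pos by auto

lemma pS_qS_left: "n \<le> - N - 2 \<Longrightarrow> pS n = pL \<and> qS n = qL"
  unfolding pS_def qS_def pL_def qL_def using left[of n] left[of "n + 2"] by auto
lemma pS_qS_right: "n \<ge> N \<Longrightarrow> pS n = pR \<and> qS n = qR"
  unfolding pS_def qS_def pR_def qR_def using right[of n] right[of "n + 2"] by auto

lemma const_ends_pS: "const_ends pS" and const_ends_qS: "const_ends qS"
  using pS_qS_left pS_qS_right by (auto intro: const_endsI[where K = "N + 2"])

definition zL where "zL = pos_root pL qL"
definition zR where "zR = pos_root pR qR"

lemma zL_root: "zL > 0" "zL\<^sup>2 = pL * zL + qL" and zR_root: "zR > 0" "zR\<^sup>2 = pR * zR + qR"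
  unfolding zL_def zR_def using pos_root_quadratic pL_pos qL_pos pR_pos qR_pos by auto

lemma zL_fixed: "zL = pL + qL / zL" and zR_fixed: "zR = pR + qR / zR"
  using zL_root zR_root by (simp_all add: field_simps power2_eq_square)

lemma qL_less_zL: "qL < zL"
  by (rule quadratic_root_gt_q[OF zL_root(1) pL_pos qL_pos zL_root(2)])
    (unfold pL_def qL_def, rule bulk_coefficient_ineqs(1)[OF bL_pos eL_pos])
lemma qR_less_zR: "qR < zR"
  by (rule quadratic_root_gt_q[OF zR_root(1) pR_pos qR_pos zR_root(2)])
    (unfold pR_def qR_def, rule bulk_coefficient_ineqs(1)[OF bR_pos eR_pos])

lemma zL_gt_1: "eL > bL \<Longrightarrow> zL > 1"
  by (rule quadratic_root_gt_1[OF zL_root(1) pL_pos qL_pos zL_root(2)])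
    (unfold pL_def qL_def, rule bulk_coefficient_ineqs(2)[OF bL_pos eL_pos])
lemma zL_lt_1: "eL < bL \<Longrightarrow> zL < 1"
  by (rule quadratic_root_lt_1[OF zL_root(1) pL_pos qL_pos zL_root(2)])
    (unfold pL_def qL_def, rule bulk_coefficient_ineqs(3)[OF bL_pos eL_pos])
lemma zR_gt_1: "eR > bR \<Longrightarrow> zR > 1"
  by (rule quadratic_root_gt_1[OF zR_root(1) pR_pos qR_pos zR_root(2)])
    (unfold pR_def qR_def, rule bulk_coefficient_ineqs(2)[OF bR_pos eR_pos])
lemma zR_lt_1: "eR < bR \<Longrightarrow> zR < 1"
  by (rule quadratic_root_lt_1[OF zR_root(1) pR_pos qR_pos zR_root(2)])
    (unfold pR_def qR_def, rule bulk_coefficient_ineqs(3)[OF bR_pos eR_pos])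

text \<open>The positive solution of the Riccati equation \<open>ric (n + 1) = pS n + qS n / ric n\<close> that sits at
  the fixed point \<open>zL\<close> near \<open>-\<infinity>\<close>. It factors the second-order recurrence for \<open>S\<close> into
  \<open>S (n + 1) = ric n * S n + \<sigma> n\<close> and \<open>\<sigma> (n + 1) = - qS n / ric n * \<sigma> n + g n\<close>.\<close>

primrec ric_from_left :: "nat \<Rightarrow> real" where
  "ric_from_left 0 = zL"
| "ric_from_left (Suc k) = pS (int k - N - 2) + qS (int k - N - 2) / ric_from_left k"

definition ric :: "int \<Rightarrow> real" where
  "ric n = (if n \<le> - N - 2 then zL else ric_from_left (nat (n + N + 2)))"

lemma ric_pos: "ric n > 0"
proof -
  have "ric_from_left k > 0" for k
    by (induction k) (auto simp: zL_root pS_pos qS_pos add_pos_pos)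
  then show ?thesis unfolding ric_def using zL_root by auto
qed

lemma ric_left: "n \<le> - N - 2 \<Longrightarrow> ric n = zL"
  unfolding ric_def by simp

lemma ric_step: "ric (n + 1) = pS n + qS n / ric n"
proof (cases "n + 1 \<le> - N - 2")
  case True
  then show ?thesis unfolding ric_def using pS_qS_left[of n] zL_fixed by auto
next
  case False
  then have "nat (n + 1 + N + 2) = Suc (nat (n + N + 2))" by auto
  moreover have "ric n = ric_from_left (nat (n + N + 2))" unfolding ric_def using False by auto
  ultimately show ?thesis unfolding ric_def using False by (simp add: algebra_simps)
qed

lemma ric_lower_bound: obtains m where "m > 0" "\<And>n. m \<le> ric n"
proof -
  obtain m where m: "m > 0" "\<And>n. m \<le> pS n"
    using const_ends_pos_lower_bound[OF const_ends_pS pS_pos] by blast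
  have "min m zL \<le> ric n" for n
  proof (cases "n \<le> - N - 2")
    case False
    have "pS (n - 1) \<le> pS (n - 1) + qS (n - 1) / ric (n - 1)"
      using qS_pos ric_pos by (simp add: less_eq_real_def)
    also have "\<dots> = ric n" using ric_step[of "n - 1"] by simp
    finally show ?thesis using m(2)[of "n - 1"] by linarith
  qed (simp add: ric_left)
  then show thesis using m zL_root by (intro that[of "min m zL"]) auto
qed

lemma ric_upper_bound: obtains B where "\<And>n. ric n \<le> B"
proof -
  obtain m where m: "m > 0" "\<And>n. m \<le> ric n" using ric_lower_bound by blast
  obtain P where P: "\<And>n. norm (pS n) \<le> P" using const_ends_bounded[OF const_ends_pS] by blast
  obtain Q where Q: "\<And>n. norm (qS n) \<le> Q" using const_ends_bounded[OF const_ends_qS] by blast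
  have "ric n \<le> max zL (P + Q / m)" for n
  proof (cases "n \<le> - N - 2")
    case False
    have "qS (n - 1) / ric (n - 1) \<le> Q / m"
      by (rule frac_le) (use Q[of "n - 1"] m qS_pos[of "n - 1"] in auto)
    then have "pS (n - 1) + qS (n - 1) / ric (n - 1) \<le> P + Q / m"
      using P[of "n - 1"] by simp
    then show ?thesis using ric_step[of "n - 1"] by simp
  qed (simp add: ric_left)
  then show thesis by (rule that)
qed

text \<open>Two steps of the map \<open>x \<mapsto> pR + qR / x\<close> contract towards its fixed point \<open>zR\<close> by the factor
  \<open>qR / zR\<^sup>2 < 1\<close>, because \<open>ric n * ric (n + 1) = pR * ric n + qR \<ge> qR\<close>.\<close>

lemma ric_two_step:
  assumes "n \<ge> N"
  shows "\<bar>ric (n + 2) - zR\<bar> \<le> (qR / zR\<^sup>2) * \<bar>ric n - zR\<bar>"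
proof -
  have step1: "ric (n + 1) = pR + qR / ric n" using ric_step[of n] pS_qS_right[of n] assms by simp
  have step2: "ric (n + 2) = pR + qR / ric (n + 1)"
    using ric_step[of "n + 1"] pS_qS_right[of "n + 1"] assms by (simp add: add.assoc)
  have pos: "ric n > 0" "ric (n + 1) > 0" using ric_pos by auto
  have "ric (n + 2) - zR = qR / ric (n + 1) - qR / zR" using step2 zR_fixed by simp
  also have "\<dots> = qR * (zR - ric (n + 1)) / (ric (n + 1) * zR)" using pos zR_root by (simp add: field_simps)
  also have "zR - ric (n + 1) = qR * (ric n - zR) / (ric n * zR)"
  proof -
    have "zR - ric (n + 1) = qR / zR - qR / ric n" using step1 zR_fixed by linarith
    also have "\<dots> = qR * (ric n - zR) / (ric n * zR)" using pos zR_root by (simp add: field_simps)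
    finally show ?thesis .
  qed
  finally have diff: "ric (n + 2) - zR = qR\<^sup>2 * (ric n - zR) / ((ric n * ric (n + 1)) * zR\<^sup>2)"
    using pos zR_root(1) by (simp add: field_simps power2_eq_square)
  have "ric n * ric (n + 1) = pR * ric n + qR" using step1 pos by (simp add: field_simps)
  then have qR_le: "qR \<le> ric n * ric (n + 1)" using pR_pos pos by simp
  have "\<bar>ric (n + 2) - zR\<bar> = qR\<^sup>2 * \<bar>ric n - zR\<bar> / ((ric n * ric (n + 1)) * zR\<^sup>2)"
    unfolding diff using pos zR_root(1) qR_pos by (simp add: abs_mult abs_divide)
  also have "\<dots> \<le> qR\<^sup>2 * \<bar>ric n - zR\<bar> / (qR * zR\<^sup>2)"
  proof (rule divide_left_mono)
    show "qR * zR\<^sup>2 \<le> ric n * ric (n + 1) * zR\<^sup>2" by (rule mult_right_mono[OF qR_le]) simp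
    show "0 < ric n * ric (n + 1) * zR\<^sup>2 * (qR * zR\<^sup>2)" using zR_root(1) pos qR_pos by simp
  qed simp
  also have "\<dots> = (qR / zR\<^sup>2) * \<bar>ric n - zR\<bar>" using qR_pos zR_root(1) by (simp add: power2_eq_square field_simps)
  finally show ?thesis .
qed

lemma ric_contraction_factor: "0 \<le> qR / zR\<^sup>2" "qR / zR\<^sup>2 < 1"
  using zR_root qR_pos pR_pos by (auto simp: divide_less_eq_1)

lemma ric_dist_zR_le:
  assumes "i \<le> 1"
  shows "\<bar>ric (N + int i + 2 * int k) - zR\<bar>
    \<le> (qR / zR\<^sup>2) ^ k * max \<bar>ric N - zR\<bar> \<bar>ric (N + 1) - zR\<bar>"
proof (induction k)
  case 0
  then show ?case using assms by (cases i) auto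
next
  case (Suc k)
  have "\<bar>ric (N + int i + 2 * int k + 2) - zR\<bar> \<le> (qR / zR\<^sup>2) * \<bar>ric (N + int i + 2 * int k) - zR\<bar>"
    by (rule ric_two_step) simp
  also have "\<dots> \<le> (qR / zR\<^sup>2) * ((qR / zR\<^sup>2) ^ k * max \<bar>ric N - zR\<bar> \<bar>ric (N + 1) - zR\<bar>)"
    by (rule mult_left_mono[OF Suc ric_contraction_factor(1)])
  finally show ?case by (simp add: algebra_simps)
qed

lemma ric_eventually_near_zR:
  assumes "\<epsilon> > 0"
  obtains M where "\<And>n. n \<ge> M \<Longrightarrow> \<bar>ric n - zR\<bar> \<le> \<epsilon>"
proof -
  define \<kappa> where "\<kappa> = qR / zR\<^sup>2"
  define E where "E = max \<bar>ric N - zR\<bar> \<bar>ric (N + 1) - zR\<bar>"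
  have \<kappa>: "0 \<le> \<kappa>" "\<kappa> < 1" unfolding \<kappa>_def by (fact ric_contraction_factor)+
  obtain j where j: "\<kappa> ^ j * E < \<epsilon>"
  proof (cases "E = 0")
    case False
    moreover have "E \<ge> 0" unfolding E_def by simp
    ultimately have "E > 0" by simp
    obtain j where "\<kappa> ^ j < \<epsilon> / E" using real_arch_pow_inv[of "\<epsilon> / E" \<kappa>] \<kappa> assms \<open>E > 0\<close> by auto
    then show ?thesis using \<open>E > 0\<close> that[of j] by (simp add: field_simps)
  qed (use assms that[of 0] in simp)
  show thesis
  proof (rule that[of "N + 2 * int j"])
    fix n assume n: "n \<ge> N + 2 * int j"
    define m where "m = nat (n - N)"
    define k where "k = m div 2"
    have "m = m mod 2 + 2 * k" "int m = n - N" unfolding k_def m_def using n by simp_all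
    then have n_eq: "n = N + int (m mod 2) + 2 * int k" by linarith
    have "j \<le> k" using n n_eq by simp
    have "\<bar>ric n - zR\<bar> \<le> \<kappa> ^ k * E"
      unfolding \<kappa>_def E_def by (subst n_eq) (rule ric_dist_zR_le, simp)
    also have "\<dots> \<le> \<kappa> ^ j * E"
      by (rule mult_right_mono[OF power_decreasing[OF \<open>j \<le> k\<close>]]) (use \<kappa> in \<open>auto simp: E_def\<close>)
    finally show "\<bar>ric n - zR\<bar> \<le> \<epsilon>" using j by simp
  qed
qed

lemma diff_rec_solvable:
  assumes same_type: "(eL > bL \<and> eR > bR) \<or> (eL < bL \<and> eR < bR)"
  shows "bounded_solvable (\<lambda>u D. \<forall>n. D (n + 1) = complex_of_real (b n / c n) * D n + u n)"
proof -
  have ends: "const_ends (\<lambda>n. b n / c n)" by (rule const_ends_comp2[OF const_ends_b const_ends_c])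
  have pos: "b n / c n > 0" for n using b_pos c_pos by simp
  obtain m where m: "m > 0" "\<And>n. m \<le> b n / c n"
    using const_ends_pos_lower_bound[OF ends pos] by blast
  obtain B where B: "\<And>n. norm (b n / c n) \<le> B" using const_ends_bounded[OF ends] by blast
  have bulk: "b n / c n = bL / eL \<or> b n / c n = bR / eR" if "\<bar>n\<bar> \<ge> N" for n
    using that left[of n] right[of n] by (cases "n \<ge> 0") auto
  show ?thesis
  proof (rule hyperbolic_ends_recurrence_solvable[where m = m and B = B and M = N
        and r = "max (bL / eL) (bR / eR)" and R = "min (bL / eL) (bR / eR)"])
    have norm_eq: "cmod (complex_of_real (b n / c n)) = b n / c n" for n
      by (simp only: norm_of_real abs_of_pos[OF pos])
    show "m > 0" "m \<le> cmod (complex_of_real (b n / c n))" for n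
      using m by (simp_all only: norm_eq)
    show "cmod (complex_of_real (b n / c n)) \<le> B" for n
      using B[of n] by (simp only: norm_eq real_norm_def abs_of_pos[OF pos])
    show "max (bL / eL) (bR / eR) < 1 \<and> (\<forall>n. N \<le> \<bar>n\<bar> \<longrightarrow> cmod (complex_of_real (b n / c n)) \<le> max (bL / eL) (bR / eR))
      \<or> min (bL / eL) (bR / eR) > 1 \<and> (\<forall>n. N \<le> \<bar>n\<bar> \<longrightarrow> min (bL / eL) (bR / eR) \<le> cmod (complex_of_real (b n / c n)))"
    proof (cases "eL > bL")
      case True
      then have "bL / eL < 1" "bR / eR < 1" using same_type bL_pos bR_pos by auto
      moreover have "b n / c n \<le> max (bL / eL) (bR / eR)" if "\<bar>n\<bar> \<ge> N" for n
        using bulk[OF that] by auto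
      ultimately show ?thesis unfolding norm_eq by simp
    next
      case False
      then have "bL / eL > 1" "bR / eR > 1" using same_type eL_pos eR_pos by auto
      moreover have "min (bL / eL) (bR / eR) \<le> b n / c n" if "\<bar>n\<bar> \<ge> N" for n
        using bulk[OF that] by auto
      ultimately show ?thesis unfolding norm_eq by simp
    qed
  qed
qed

lemma ric_near_ends:
  assumes "\<epsilon> > 0"
  obtains M where "\<And>n. \<bar>n\<bar> \<ge> M
    \<Longrightarrow> (ric n = zL \<and> qS n = qL) \<or> (zR - \<epsilon> \<le> ric n \<and> ric n \<le> zR + \<epsilon> \<and> qS n = qR)"
proof -
  obtain M1 where M1: "\<And>n. n \<ge> M1 \<Longrightarrow> \<bar>ric n - zR\<bar> \<le> \<epsilon>"
    using ric_eventually_near_zR[OF assms] by blast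
  define P where "P n \<longleftrightarrow> (ric n = zL \<and> qS n = qL) \<or> (zR - \<epsilon> \<le> ric n \<and> ric n \<le> zR + \<epsilon> \<and> qS n = qR)"
    for n
  have "P n" if "n \<ge> max M1 N" for n
    using M1[of n] pS_qS_right[of n] that unfolding P_def abs_le_iff by auto
  moreover have "P n" if "n \<le> - (N + 2)" for n using ric_left pS_qS_left that unfolding P_def by simp
  ultimately show thesis using eventually_both_ends[of "max M1 N" P "N + 2"] that unfolding P_def by blast
qed

lemma ric_rec_solvable:
  assumes same_type: "(eL > bL \<and> eR > bR) \<or> (eL < bL \<and> eR < bR)"
  shows "bounded_solvable (\<lambda>u S. \<forall>n. S (n + 1) = complex_of_real (ric n) * S n + u n)"
proof -
  obtain m where m: "m > 0" "\<And>n. m \<le> ric n" using ric_lower_bound by blast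
  obtain B where B: "\<And>n. ric n \<le> B" using ric_upper_bound by blast
  have "zR \<noteq> 1" using same_type zR_gt_1 zR_lt_1 by fastforce
  then have "\<bar>zR - 1\<bar> / 2 > 0" by simp
  then obtain M where M: "\<And>n. \<bar>n\<bar> \<ge> M \<Longrightarrow> ric n = zL
      \<or> zR - \<bar>zR - 1\<bar> / 2 \<le> ric n \<and> ric n \<le> zR + \<bar>zR - 1\<bar> / 2"
    using ric_near_ends by metis
  have norm_eq: "cmod (complex_of_real (ric n)) = ric n" for n using ric_pos[of n] by simp
  show ?thesis
  proof (rule hyperbolic_ends_recurrence_solvable[where m = m and B = B and M = M
        and r = "max zL ((zR + 1) / 2)" and R = "min zL ((zR + 1) / 2)"])
    show "m > 0" "m \<le> cmod (complex_of_real (ric n))" "cmod (complex_of_real (ric n)) \<le> B" for n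
      using m B by (simp_all only: norm_eq)
    show "max zL ((zR + 1) / 2) < 1 \<and> (\<forall>n. M \<le> \<bar>n\<bar> \<longrightarrow> cmod (complex_of_real (ric n)) \<le> max zL ((zR + 1) / 2))
      \<or> min zL ((zR + 1) / 2) > 1 \<and> (\<forall>n. M \<le> \<bar>n\<bar> \<longrightarrow> min zL ((zR + 1) / 2) \<le> cmod (complex_of_real (ric n)))"
    proof (cases "eL > bL")
      case True
      then have "zL > 1" "zR > 1" using same_type zL_gt_1 zR_gt_1 by auto
      moreover have "min zL ((zR + 1) / 2) \<le> ric n" if "\<bar>n\<bar> \<ge> M" for n
        using M[OF that] abs_of_pos[of "zR - 1"] \<open>zR > 1\<close> by (auto simp: min_le_iff_disj field_simps)
      ultimately show ?thesis unfolding norm_eq by simp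
    next
      case False
      then have "zL < 1" "zR < 1" using same_type zL_lt_1 zR_lt_1 by auto
      moreover have "ric n \<le> max zL ((zR + 1) / 2)" if "\<bar>n\<bar> \<ge> M" for n
        using M[OF that] abs_of_neg[of "zR - 1"] \<open>zR < 1\<close> by (auto simp: le_max_iff_disj field_simps)
      ultimately show ?thesis unfolding norm_eq by simp
    qed
  qed
qed

lemma ric_cofactor_solvable:
  "bounded_solvable (\<lambda>u \<sigma>. \<forall>n. \<sigma> (n + 1) = complex_of_real (- qS n / ric n) * \<sigma> n + u n)"
proof -
  have norm_eq: "cmod (complex_of_real (- qS n / ric n)) = qS n / ric n" for n
    using qS_pos[of n] ric_pos[of n] by (simp add: norm_divide)
  obtain m where m: "m > 0" "\<And>n. m \<le> ric n" using ric_lower_bound by blast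
  obtain Q where Q: "\<And>n. norm (qS n) \<le> Q" using const_ends_bounded[OF const_ends_qS] by blast
  have B: "cmod (complex_of_real (- qS n / ric n)) \<le> Q / m" for n
    unfolding norm_eq by (rule frac_le) (use Q[of n] qS_pos[of n] m in auto)
  define r where "r = max (qL / zL) (2 * qR / (zR + qR))"
  have r: "r < 1" unfolding r_def using qL_less_zL qR_less_zR zL_root zR_root qR_pos by (auto simp: field_simps)
  have \<epsilon>: "(zR - qR) / 2 > 0" using qR_less_zR by simp
  obtain M where M: "\<And>n. \<bar>n\<bar> \<ge> M \<Longrightarrow> (ric n = zL \<and> qS n = qL)
      \<or> (zR - (zR - qR) / 2 \<le> ric n \<and> ric n \<le> zR + (zR - qR) / 2 \<and> qS n = qR)"
    by (fact ric_near_ends[OF \<epsilon>])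
  have "cmod (complex_of_real (- qS n / ric n)) \<le> r" if "\<bar>n\<bar> \<ge> M" for n
  proof (cases "ric n = zL \<and> qS n = qL")
    case False
    then have ric: "(zR + qR) / 2 \<le> ric n" and "qS n = qR" using M[OF that] by (auto simp: field_simps)
    have "qR / ric n \<le> qR / ((zR + qR) / 2)"
      by (rule divide_left_mono[OF ric]) (use qR_pos zR_root ric_pos[of n] in auto)
    then show ?thesis unfolding norm_eq r_def using \<open>qS n = qR\<close> by (simp add: mult.commute)
  next
    case True
    then show ?thesis unfolding norm_eq r_def by simp
  qed
  then show ?thesis
    by (rule eventually_contracting_recurrence_solvable[where \<rho> = "\<lambda>n. complex_of_real (- qS n / ric n)", OF B r])
qed

lemma sum_rec_solvable:
  assumes same_type: "(eL > bL \<and> eR > bR) \<or> (eL < bL \<and> eR < bR)"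
  shows "bounded_solvable
    (\<lambda>g S. \<forall>n. S (n + 2) = complex_of_real (pS n) * S (n + 1) + complex_of_real (qS n) * S n + g n)"
  using ric_cofactor_solvable ric_rec_solvable[OF same_type]
proof (rule bounded_solvable_compose)
  fix g \<sigma> S :: "int \<Rightarrow> complex"
  assume \<sigma>: "\<forall>n. \<sigma> (n + 1) = complex_of_real (- qS n / ric n) * \<sigma> n + g n"
    and S: "\<forall>n. S (n + 1) = complex_of_real (ric n) * S n + \<sigma> n"
  show "\<forall>n. S (n + 2) = complex_of_real (pS n) * S (n + 1) + complex_of_real (qS n) * S n + g n"
  proof
    fix n
    have S2: "S (n + 2) = complex_of_real (ric (n + 1)) * S (n + 1) + \<sigma> (n + 1)"
      using S[rule_format, of "n + 1"] by (simp add: add.assoc)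
    have \<sigma>0: "\<sigma> n = S (n + 1) - complex_of_real (ric n) * S n" using S by simp
    have \<sigma>1: "\<sigma> (n + 1) = complex_of_real (- qS n / ric n) * \<sigma> n + g n" using \<sigma> by simp
    have ric1: "complex_of_real (ric (n + 1))
        = complex_of_real (pS n) + complex_of_real (qS n) / complex_of_real (ric n)"
      using ric_step[of n] by simp
    have "complex_of_real (ric n) \<noteq> 0" using ric_pos[of n] by simp
    then show "S (n + 2) = complex_of_real (pS n) * S (n + 1) + complex_of_real (qS n) * S n + g n"
      unfolding S2 \<sigma>1 \<sigma>0 ric1 by (simp add: field_simps)
  qed
qed

text \<open>Rows 1--3 of \<open>H_II(0)\<close>, as an operator on the components \<open>(w4, w5, w6)\<close>.\<close>

definition T1 :: "(int \<Rightarrow> complex) \<Rightarrow> (int \<Rightarrow> complex) \<Rightarrow> (int \<Rightarrow> complex) \<Rightarrow> int \<Rightarrow> complex" where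
  "T1 X4 X5 X6 n = - complex_of_real (b n) * X4 n - complex_of_real (b n) * X5 n
    - complex_of_real (c n) * X6 (n + 1)"
definition T2 :: "(int \<Rightarrow> complex) \<Rightarrow> (int \<Rightarrow> complex) \<Rightarrow> (int \<Rightarrow> complex) \<Rightarrow> int \<Rightarrow> complex" where
  "T2 X4 X5 X6 n = - complex_of_real (b n) * X4 n - complex_of_real (d (n - 2)) * X5 (n - 2)
    - complex_of_real (b n) * X6 n"
definition T3 :: "(int \<Rightarrow> complex) \<Rightarrow> (int \<Rightarrow> complex) \<Rightarrow> (int \<Rightarrow> complex) \<Rightarrow> int \<Rightarrow> complex" where
  "T3 X4 X5 X6 n = - complex_of_real (c n) * X4 (n + 1) - complex_of_real (b n) * X5 n
    - complex_of_real (b n) * X6 n"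

text \<open>Solving \<open>T (X4, X5, X6) = (F, G, H)\<close>: the difference \<open>D = X4 - X6\<close> solves a first-order
  recurrence (rows 1 and 3 subtracted), the sum \<open>S = X4 + X6\<close> a second-order one (rows 1 and 3
  added, with \<open>X5\<close> eliminated through row 2), and \<open>X5\<close> is then read off from row 2.\<close>

lemma T_reconstruction:
  fixes F G H S D :: "int \<Rightarrow> complex"
  assumes D: "\<And>n. D (n + 1) = complex_of_real (b n / c n) * D n
      + (complex_of_real (1 / c n) * F n + complex_of_real (- 1 / c n) * H n)"
    and S: "\<And>n. S (n + 2) = complex_of_real (pS n) * S (n + 1) + complex_of_real (qS n) * S n
      + (complex_of_real (d n / (2 * b n * b (n + 2))) * F n
        + complex_of_real (d n / (2 * b n * b (n + 2))) * H n
        + complex_of_real (- 1 / b (n + 2)) * G (n + 2))"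
  defines "X4 \<equiv> \<lambda>n. complex_of_real (1 / 2) * S n + complex_of_real (1 / 2) * D n"
    and "X5 \<equiv> \<lambda>n. complex_of_real (- 1 / d n) * G (n + 2) + complex_of_real (- b (n + 2) / d n) * S (n + 2)"
    and "X6 \<equiv> \<lambda>n. complex_of_real (1 / 2) * S n + complex_of_real (- 1 / 2) * D n"
  shows "T1 X4 X5 X6 = F" and "T2 X4 X5 X6 = G" and "T3 X4 X5 X6 = H"
proof -
  have nz: "complex_of_real (b n) \<noteq> 0" "complex_of_real (c n) \<noteq> 0" "complex_of_real (d n) \<noteq> 0" for n
    using b_pos[of n] c_pos[of n] d_pos[of n] by auto
  show "T1 X4 X5 X6 = F"
  proof
    fix n
    show "T1 X4 X5 X6 n = F n"
      unfolding T1_def X4_def X5_def X6_def S D using nz[of n] nz[of "n + 2"]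
      by (simp add: pS_def qS_def field_simps)
  qed
  show "T3 X4 X5 X6 = H"
  proof
    fix n
    show "T3 X4 X5 X6 n = H n"
      unfolding T3_def X4_def X5_def X6_def S D using nz[of n] nz[of "n + 2"]
      by (simp add: pS_def qS_def field_simps)
  qed
  show "T2 X4 X5 X6 = G"
  proof
    fix n
    show "T2 X4 X5 X6 n = G n"
      unfolding T2_def X4_def X5_def X6_def using nz[of "n - 2"] by (simp add: field_simps)
  qed
qed

lemma sum_diff_solution_families:
  assumes same_type: "(eL > bL \<and> eR > bR) \<or> (eL < bL \<and> eR < bR)"
  obtains D S :: "seq_triple \<Rightarrow> int \<Rightarrow> complex"
  where "bounded_family triple_l2 triple_sqnorm D" and "bounded_family triple_l2 triple_sqnorm S"
    and "\<And>F n. triple_l2 F \<Longrightarrow> D F (n + 1) = complex_of_real (b n / c n) * D F n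
      + (complex_of_real (1 / c n) * fst F n + complex_of_real (- 1 / c n) * snd (snd F) n)"
    and "\<And>F n. triple_l2 F \<Longrightarrow> S F (n + 2) = complex_of_real (pS n) * S F (n + 1) + complex_of_real (qS n) * S F n
      + (complex_of_real (d n / (2 * b n * b (n + 2))) * fst F n
        + complex_of_real (d n / (2 * b n * b (n + 2))) * snd (snd F) n
        + complex_of_real (- 1 / b (n + 2)) * fst (snd F) (n + 2))"
proof -
  let ?P = triple_l2 and ?t = triple_sqnorm
  note t = triple_sqnorm_nonneg and F = bounded_family_triple_components
  have b2: "const_ends (\<lambda>n. b (n + 2))" by (rule const_ends_shift[OF const_ends_b])
  have "bounded_family ?P ?t
      (\<lambda>F n. complex_of_real (1 / c n) * fst F n + complex_of_real (- 1 / c n) * snd (snd F) n)"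
    by (intro bounded_family_add bounded_family_mult F const_ends_comp[OF const_ends_c] t)
  then obtain D where "bounded_family ?P ?t D" and "\<And>F. ?P F \<Longrightarrow> \<forall>n. D F (n + 1) = complex_of_real (b n / c n) * D F n
      + (complex_of_real (1 / c n) * fst F n + complex_of_real (- 1 / c n) * snd (snd F) n)"
    using bounded_family_solve[where P = ?P and t = ?t, OF diff_rec_solvable[OF same_type] _ t] by blast
  moreover have "const_ends (\<lambda>n. d n / (2 * b n * b (n + 2)))"
    by (rule const_ends_comp2[OF const_ends_d const_ends_comp2[OF const_ends_b b2]])
  then have "bounded_family ?P ?t (\<lambda>F n. complex_of_real (d n / (2 * b n * b (n + 2))) * fst F n
      + complex_of_real (d n / (2 * b n * b (n + 2))) * snd (snd F) n
      + complex_of_real (- 1 / b (n + 2)) * fst (snd F) (n + 2))"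
    by (intro bounded_family_add bounded_family_mult F bounded_family_shift[OF F(2)] const_ends_comp[OF b2] t)
  then obtain S where "bounded_family ?P ?t S" and "\<And>F. ?P F \<Longrightarrow> \<forall>n. S F (n + 2)
      = complex_of_real (pS n) * S F (n + 1) + complex_of_real (qS n) * S F n
      + (complex_of_real (d n / (2 * b n * b (n + 2))) * fst F n
        + complex_of_real (d n / (2 * b n * b (n + 2))) * snd (snd F) n
        + complex_of_real (- 1 / b (n + 2)) * fst (snd F) (n + 2))"
    using bounded_family_solve[where P = ?P and t = ?t, OF sum_rec_solvable[OF same_type] _ t] by blast
  ultimately show thesis using that by blast
qed

lemma T_right_inverse_family:
  assumes same_type: "(eL > bL \<and> eR > bR) \<or> (eL < bL \<and> eR < bR)"
  obtains X4 X5 X6 :: "seq_triple \<Rightarrow> int \<Rightarrow> complex"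
  where "bounded_family triple_l2 triple_sqnorm X4" and "bounded_family triple_l2 triple_sqnorm X5"
    and "bounded_family triple_l2 triple_sqnorm X6"
    and "\<And>F. triple_l2 F \<Longrightarrow> T1 (X4 F) (X5 F) (X6 F) = fst F"
    and "\<And>F. triple_l2 F \<Longrightarrow> T2 (X4 F) (X5 F) (X6 F) = fst (snd F)"
    and "\<And>F. triple_l2 F \<Longrightarrow> T3 (X4 F) (X5 F) (X6 F) = snd (snd F)"
proof -
  obtain D S where D: "bounded_family triple_l2 triple_sqnorm D" and S: "bounded_family triple_l2 triple_sqnorm S"
    and recs: "\<And>F n. triple_l2 F \<Longrightarrow> D F (n + 1) = complex_of_real (b n / c n) * D F n
      + (complex_of_real (1 / c n) * fst F n + complex_of_real (- 1 / c n) * snd (snd F) n)"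
      "\<And>F n. triple_l2 F \<Longrightarrow> S F (n + 2) = complex_of_real (pS n) * S F (n + 1) + complex_of_real (qS n) * S F n
      + (complex_of_real (d n / (2 * b n * b (n + 2))) * fst F n
        + complex_of_real (d n / (2 * b n * b (n + 2))) * snd (snd F) n
        + complex_of_real (- 1 / b (n + 2)) * fst (snd F) (n + 2))"
    by (fact sum_diff_solution_families[OF same_type])
  define X4 where "X4 F n = complex_of_real (1 / 2) * S F n + complex_of_real (1 / 2) * D F n"
    for F :: seq_triple and n
  define X5 where "X5 F n = complex_of_real (- 1 / d n) * fst (snd F) (n + 2)
      + complex_of_real (- b (n + 2) / d n) * S F (n + 2)" for F :: seq_triple and n
  define X6 where "X6 F n = complex_of_real (1 / 2) * S F n + complex_of_real (- 1 / 2) * D F n"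
    for F :: seq_triple and n
  note t = triple_sqnorm_nonneg
  show thesis
  proof (rule that[of X4 X5 X6])
    show "bounded_family triple_l2 triple_sqnorm X4" "bounded_family triple_l2 triple_sqnorm X6"
      unfolding X4_def X6_def by (intro bounded_family_add bounded_family_mult S D const_ends_const t)+
    show "bounded_family triple_l2 triple_sqnorm X5" unfolding X5_def
      by (intro bounded_family_add bounded_family_mult bounded_family_shift[OF bounded_family_triple_components(2)]
          bounded_family_shift[OF S] const_ends_comp[OF const_ends_d]
          const_ends_comp2[OF const_ends_shift[OF const_ends_b, of 2] const_ends_d] t)
    fix F assume "triple_l2 F"
    note T = T_reconstruction[OF recs[OF this]]
    show "T1 (X4 F) (X5 F) (X6 F) = fst F" "T2 (X4 F) (X5 F) (X6 F) = fst (snd F)"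
      "T3 (X4 F) (X5 F) (X6 F) = snd (snd F)"
      using T unfolding X4_def[abs_def] X5_def[abs_def] X6_def[abs_def] by simp_all
  qed
qed

lemma T_bounded_solvable:
  assumes same_type: "(eL > bL \<and> eR > bR) \<or> (eL < bL \<and> eR < bR)"
  obtains K where "\<And>F G H. l2 F \<Longrightarrow> l2 G \<Longrightarrow> l2 H \<Longrightarrow> \<exists>X4 X5 X6. l2 X4 \<and> l2 X5 \<and> l2 X6
    \<and> sqnorm X4 + sqnorm X5 + sqnorm X6 \<le> K * (sqnorm F + sqnorm G + sqnorm H)
    \<and> T1 X4 X5 X6 = F \<and> T2 X4 X5 X6 = G \<and> T3 X4 X5 X6 = H"
proof -
  obtain X4 X5 X6 where X: "bounded_family triple_l2 triple_sqnorm X4"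
    "bounded_family triple_l2 triple_sqnorm X5" "bounded_family triple_l2 triple_sqnorm X6"
    and T: "\<And>F. triple_l2 F \<Longrightarrow> T1 (X4 F) (X5 F) (X6 F) = fst F"
      "\<And>F. triple_l2 F \<Longrightarrow> T2 (X4 F) (X5 F) (X6 F) = fst (snd F)"
      "\<And>F. triple_l2 F \<Longrightarrow> T3 (X4 F) (X5 F) (X6 F) = snd (snd F)"
    by (fact T_right_inverse_family[OF same_type])
  obtain K4 K5 K6 where K: "\<And>F. triple_l2 F \<Longrightarrow> sqnorm (X4 F) \<le> K4 * triple_sqnorm F"
    "\<And>F. triple_l2 F \<Longrightarrow> sqnorm (X5 F) \<le> K5 * triple_sqnorm F"
    "\<And>F. triple_l2 F \<Longrightarrow> sqnorm (X6 F) \<le> K6 * triple_sqnorm F"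
    using bounded_familyE[OF X(1) triple_sqnorm_nonneg] bounded_familyE[OF X(2) triple_sqnorm_nonneg]
      bounded_familyE[OF X(3) triple_sqnorm_nonneg] by metis
  show thesis
  proof (rule that[of "K4 + K5 + K6"])
    fix F G H assume "l2 F" "l2 G" "l2 H"
    then have P: "triple_l2 (F, G, H)" by (simp add: triple_l2_def)
    then show "\<exists>X4 X5 X6. l2 X4 \<and> l2 X5 \<and> l2 X6
      \<and> sqnorm X4 + sqnorm X5 + sqnorm X6 \<le> (K4 + K5 + K6) * (sqnorm F + sqnorm G + sqnorm H)
      \<and> T1 X4 X5 X6 = F \<and> T2 X4 X5 X6 = G \<and> T3 X4 X5 X6 = H"
      using X[THEN bounded_family_l2, OF P] K[OF P] T[OF P]
      by (intro exI[of _ "X4 (F, G, H)"] exI[of _ "X5 (F, G, H)"] exI[of _ "X6 (F, G, H)"])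
        (simp add: triple_sqnorm_def algebra_simps)
  qed
qed

definition T_kernel :: "(int \<Rightarrow> complex) \<Rightarrow> (int \<Rightarrow> complex) \<Rightarrow> (int \<Rightarrow> complex) \<Rightarrow> bool" where
  "T_kernel X4 X5 X6 \<longleftrightarrow> l2 X4 \<and> l2 X5 \<and> l2 X6
    \<and> T1 X4 X5 X6 = (\<lambda>n. 0) \<and> T2 X4 X5 X6 = (\<lambda>n. 0) \<and> T3 X4 X5 X6 = (\<lambda>n. 0)"

lemma T_kernel_zero: "T_kernel (\<lambda>n. 0) (\<lambda>n. 0) (\<lambda>n. 0)"
  by (simp add: T_kernel_def T1_def[abs_def] T2_def[abs_def] T3_def[abs_def] l2_zero)

lemma kernel_recurrences:
  assumes T: "T1 X4 X5 X6 = (\<lambda>n. 0)" "T2 X4 X5 X6 = (\<lambda>n. 0)" "T3 X4 X5 X6 = (\<lambda>n. 0)"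
  shows "X4 (n + 1) - X6 (n + 1) = complex_of_real (b n / c n) * (X4 n - X6 n)"
    and "X5 n = complex_of_real (- b (n + 2) / d n) * (X4 (n + 2) + X6 (n + 2))"
    and "X4 (n + 2) + X6 (n + 2)
      = complex_of_real (pS n) * (X4 (n + 1) + X6 (n + 1)) + complex_of_real (qS n) * (X4 n + X6 n)"
proof -
  let ?B = "complex_of_real (b n)" and ?B2 = "complex_of_real (b (n + 2))"
    and ?C = "complex_of_real (c n)" and ?D = "complex_of_real (d n)"
  have nz: "?B \<noteq> 0" "?B2 \<noteq> 0" "?C \<noteq> 0" "?D \<noteq> 0"
    using b_pos[of n] b_pos[of "n + 2"] c_pos[of n] d_pos[of n] by auto
  have row1: "- ?B * X4 n - ?B * X5 n - ?C * X6 (n + 1) = 0"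
    using fun_cong[OF T(1), of n] unfolding T1_def .
  have row3: "- ?C * X4 (n + 1) - ?B * X5 n - ?B * X6 n = 0"
    using fun_cong[OF T(3), of n] unfolding T3_def .
  show "X4 (n + 1) - X6 (n + 1) = complex_of_real (b n / c n) * (X4 n - X6 n)"
  proof -
    have "?C * (X4 (n + 1) - X6 (n + 1)) - ?B * (X4 n - X6 n)
        = (- ?B * X4 n - ?B * X5 n - ?C * X6 (n + 1)) - (- ?C * X4 (n + 1) - ?B * X5 n - ?B * X6 n)"
      by (simp add: algebra_simps)
    then have "?C * (X4 (n + 1) - X6 (n + 1)) = ?B * (X4 n - X6 n)" unfolding row1 row3 by simp
    then show ?thesis using nz by (simp add: field_simps)
  qed
  show X5: "X5 n = complex_of_real (- b (n + 2) / d n) * (X4 (n + 2) + X6 (n + 2))"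
    using fun_cong[OF T(2), of "n + 2"] nz unfolding T2_def by (simp add: field_simps)
  have "- ?B * (X4 n + X6 n) - 2 * ?B * X5 n - ?C * (X4 (n + 1) + X6 (n + 1))
      = (- ?B * X4 n - ?B * X5 n - ?C * X6 (n + 1)) + (- ?C * X4 (n + 1) - ?B * X5 n - ?B * X6 n)"
    by (simp add: algebra_simps)
  then have "- ?B * (X4 n + X6 n) - 2 * ?B * X5 n - ?C * (X4 (n + 1) + X6 (n + 1)) = 0"
    unfolding row1 row3 by simp
  moreover have "S2 = ?C * ?D / (2 * ?B * ?B2) * S1 + ?D / (2 * ?B2) * S0"
    if "- ?B * S0 - 2 * ?B * Y - ?C * S1 = 0" "Y = - ?B2 / ?D * S2" for S0 S1 S2 Y
    using that nz by (simp add: field_simps)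
  ultimately show "X4 (n + 2) + X6 (n + 2)
      = complex_of_real (pS n) * (X4 (n + 1) + X6 (n + 1)) + complex_of_real (qS n) * (X4 n + X6 n)"
    using X5 unfolding pS_def qS_def by simp
qed

lemma l2_sum_rec_first_order:
  assumes l2: "l2 S"
    and S: "\<And>n. S (n + 2) = complex_of_real (pS n) * S (n + 1) + complex_of_real (qS n) * S n"
  shows "S (n + 1) = complex_of_real (ric n) * S n"
proof -
  define \<sigma> where "\<sigma> n = S (n + 1) - complex_of_real (ric n) * S n" for n
  obtain B where B: "\<And>n. ric n \<le> B" using ric_upper_bound by blast
  have "cmod (complex_of_real (ric n)) \<le> B" for n using B[of n] ric_pos[of n] by simp
  then have "l2 \<sigma>" unfolding \<sigma>_def
    using l2_diff[OF l2_shift[OF l2] l2_mult(1)[where m = "\<lambda>n. complex_of_real (ric n)", OF _ l2]] by blast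
  moreover have "\<sigma> (n + 1) = complex_of_real (- qS n / ric n) * \<sigma> n" for n
  proof -
    have "complex_of_real (ric n) \<noteq> 0" using ric_pos[of n] by simp
    moreover have "complex_of_real (ric (n + 1))
        = complex_of_real (pS n) + complex_of_real (qS n) / complex_of_real (ric n)"
      using ric_step[of n] by simp
    ultimately show ?thesis unfolding \<sigma>_def using S[of n] by (simp add: field_simps add.assoc)
  qed
  moreover have "cmod (complex_of_real (- qS n / ric n)) \<le> 1" if "n \<le> - N - 2" for n
    using pS_qS_left[OF that] ric_left[OF that] qL_less_zL qL_pos zL_root by (simp add: norm_divide)
  ultimately have "\<sigma> n = 0" by (rule l2_first_order_vanishes_left)
  then show ?thesis unfolding \<sigma>_def by simp
qed

lemma l2_sum_rec_zero_if_eL_lt_bL: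
  assumes "eL < bL" "l2 S"
    and "\<And>n. S (n + 2) = complex_of_real (pS n) * S (n + 1) + complex_of_real (qS n) * S n"
  shows "S n = 0"
proof (rule l2_first_order_vanishes_left[OF assms(2) l2_sum_rec_first_order[OF assms(2,3)]])
  show "cmod (complex_of_real (ric n)) \<le> 1" if "n \<le> - N - 2" for n
    using ric_left[OF that] zL_lt_1[OF assms(1)] zL_root by simp
qed

lemma l2_sum_rec_zero_if_eR_gt_bR:
  assumes "eR > bR" "l2 S"
    and "\<And>n. S (n + 2) = complex_of_real (pS n) * S (n + 1) + complex_of_real (qS n) * S n"
  shows "S n = 0"
proof -
  obtain M where M: "\<And>n. n \<ge> M \<Longrightarrow> \<bar>ric n - zR\<bar> \<le> zR - 1"
    using ric_eventually_near_zR[of "zR - 1"] zR_gt_1[OF assms(1)] by auto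
  show ?thesis
  proof (rule l2_first_order_vanishes_right[OF assms(2) l2_sum_rec_first_order[OF assms(2,3)]])
    show "complex_of_real (ric n) \<noteq> 0" for n using ric_pos[of n] by simp
    show "cmod (complex_of_real (ric n)) \<ge> 1" if "n \<ge> M" for n
      using M[OF that] by (auto simp: abs_le_iff)
  qed
qed

lemma l2_prod_sol_ric:
  assumes "eL > bL" "eR < bR"
  shows "l2 (prod_sol (\<lambda>n. complex_of_real (ric n)))"
proof -
  have z: "zL > 1" "zR < 1" using zL_gt_1[OF assms(1)] zR_lt_1[OF assms(2)] by auto
  obtain M1 where M1: "\<And>n. n \<ge> M1 \<Longrightarrow> \<bar>ric n - zR\<bar> \<le> (1 - zR) / 2"
    using ric_eventually_near_zR[of "(1 - zR) / 2"] z by auto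
  show ?thesis
  proof (rule l2_prod_sol[where M = "max (max M1 (N + 2)) 0" and r = "(1 + zR) / 2" and R = zL])
    show "complex_of_real (ric n) \<noteq> 0" for n using ric_pos[of n] by simp
    show "cmod (complex_of_real (ric n)) \<le> (1 + zR) / 2" if "n \<ge> max (max M1 (N + 2)) 0" for n
    proof -
      have "\<bar>ric n - zR\<bar> \<le> (1 - zR) / 2" using M1 that by simp
      then have "ric n \<le> (1 + zR) / 2" unfolding abs_le_iff by (auto simp: field_simps)
      then show ?thesis using ric_pos[of n] by simp
    qed
    show "cmod (complex_of_real (ric n)) \<ge> zL" if "n \<le> - max (max M1 (N + 2)) 0" for n
      using ric_left[of n] that zL_root by simp
  qed (use z zR_root in auto)
qed

lemma l2_diff_rec_zero_if_eL_gt_bL: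
  assumes "eL > bL" "l2 D" "\<And>n. D (n + 1) = complex_of_real (b n / c n) * D n"
  shows "D n = 0"
proof (rule l2_first_order_vanishes_left[OF assms(2,3)])
  show "cmod (complex_of_real (b n / c n)) \<le> 1" if "n \<le> - N" for n
    using left[OF that] assms(1) bL_pos eL_pos by (simp add: norm_divide)
qed

lemma l2_diff_rec_zero_if_eR_lt_bR:
  assumes "eR < bR" "l2 D" "\<And>n. D (n + 1) = complex_of_real (b n / c n) * D n"
  shows "D n = 0"
proof (rule l2_first_order_vanishes_right[OF assms(2,3)])
  show "complex_of_real (b n / c n) \<noteq> 0" for n using b_pos[of n] c_pos[of n] by simp
  show "cmod (complex_of_real (b n / c n)) \<ge> 1" if "n \<ge> N" for n
    using right[OF that] assms(1) bR_pos eR_pos by (simp add: norm_divide)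
qed

lemma l2_prod_sol_b_div_c:
  assumes "eL < bL" "eR > bR"
  shows "l2 (prod_sol (\<lambda>n. complex_of_real (b n / c n)))"
proof (rule l2_prod_sol[where M = N and r = "bR / eR" and R = "bL / eL"])
  show "complex_of_real (b n / c n) \<noteq> 0" for n using b_pos[of n] c_pos[of n] by simp
  show "cmod (complex_of_real (b n / c n)) \<le> bR / eR" if "n \<ge> N" for n
    using right[OF that] bR_pos eR_pos by (simp add: norm_divide)
  show "cmod (complex_of_real (b n / c n)) \<ge> bL / eL" if "n \<le> - N" for n
    using left[OF that] bL_pos eL_pos by (simp add: norm_divide)
qed (use assms N_nonneg bL_pos bR_pos eL_pos eR_pos in auto)

lemma T_kernelD:
  assumes "T_kernel X4 X5 X6"
  shows "l2 X4" "l2 X5" "l2 X6"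
    and "T1 X4 X5 X6 = (\<lambda>n. 0)" "T2 X4 X5 X6 = (\<lambda>n. 0)" "T3 X4 X5 X6 = (\<lambda>n. 0)"
  using assms unfolding T_kernel_def by auto

lemma kernel_trivial:
  assumes same_type: "(eL > bL \<and> eR > bR) \<or> (eL < bL \<and> eR < bR)" and X: "T_kernel X4 X5 X6"
  shows "X4 = (\<lambda>n. 0) \<and> X5 = (\<lambda>n. 0) \<and> X6 = (\<lambda>n. 0)"
proof -
  note l2 = T_kernelD(1-3)[OF X] and rec = kernel_recurrences[OF T_kernelD(4-6)[OF X]]
  have diff: "X4 n - X6 n = 0" for n
    using same_type l2_diff_rec_zero_if_eL_gt_bL[OF _ l2_diff[OF l2(1,3)] rec(1)]
      l2_diff_rec_zero_if_eR_lt_bR[OF _ l2_diff[OF l2(1,3)] rec(1)] by blast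
  have sum: "X4 n + X6 n = 0" for n
    using same_type l2_sum_rec_zero_if_eR_gt_bR[OF _ l2_add(1)[OF l2(1,3)] rec(3)]
      l2_sum_rec_zero_if_eL_lt_bL[OF _ l2_add(1)[OF l2(1,3)] rec(3)] by blast
  have "X4 n = 0" "X6 n = 0" for n using diff[of n] sum[of n] by (simp_all add: algebra_simps)
  then show ?thesis using rec(2) sum by auto
qed

lemma prod_sol_ric_sum_rec:
  defines "\<psi> \<equiv> prod_sol (\<lambda>n. complex_of_real (ric n))"
  shows "\<psi> (n + 2) = complex_of_real (pS n) * \<psi> (n + 1) + complex_of_real (qS n) * \<psi> n"
proof -
  have step: "\<psi> (n + 1) = complex_of_real (ric n) * \<psi> n" for n
    unfolding \<psi>_def by (rule prod_sol_step) (use ric_pos in \<open>simp add: less_imp_neq[symmetric]\<close>)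
  have "ric n * ric (n + 1) = pS n * ric n + qS n"
    using ric_step[of n] ric_pos[of n] by (simp add: field_simps)
  then have "complex_of_real (ric n) * complex_of_real (ric (n + 1))
      = complex_of_real (pS n) * complex_of_real (ric n) + complex_of_real (qS n)"
    by (metis of_real_add of_real_mult)
  moreover have "\<psi> (n + 2) = complex_of_real (ric n) * complex_of_real (ric (n + 1)) * \<psi> n"
    using step[of "n + 1"] step[of n] by (simp add: add.assoc ac_simps)
  ultimately show ?thesis using step[of n] by (simp add: algebra_simps)
qed

lemma kernel_diff_mode:
  assumes "eL < bL" and X: "T_kernel X4 X5 X6"
  shows "X4 n + X6 n = 0"
    and "X4 n - X6 n = (X4 0 - X6 0) * prod_sol (\<lambda>n. complex_of_real (b n / c n)) n"
proof -
  note rec = kernel_recurrences[OF T_kernelD(4-6)[OF X]]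
  show "X4 n + X6 n = 0"
    by (rule l2_sum_rec_zero_if_eL_lt_bL[OF assms(1) l2_add(1)[OF T_kernelD(1,3)[OF X]] rec(3)])
  show "X4 n - X6 n = (X4 0 - X6 0) * prod_sol (\<lambda>n. complex_of_real (b n / c n)) n"
    by (rule prod_sol_unique[where f = "\<lambda>n. X4 n - X6 n"])
      (use b_pos c_pos rec(1) in \<open>simp_all add: less_imp_neq[symmetric]\<close>)
qed

lemma kernel_sum_mode:
  assumes "eL > bL" and X: "T_kernel X4 X5 X6"
  shows "X4 n - X6 n = 0"
    and "X4 n + X6 n = (X4 0 + X6 0) * prod_sol (\<lambda>n. complex_of_real (ric n)) n"
proof -
  note l2 = T_kernelD(1,3)[OF X] and rec = kernel_recurrences[OF T_kernelD(4-6)[OF X]]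
  show "X4 n - X6 n = 0"
    by (rule l2_diff_rec_zero_if_eL_gt_bL[OF assms(1) l2_diff[OF l2] rec(1)])
  show "X4 n + X6 n = (X4 0 + X6 0) * prod_sol (\<lambda>n. complex_of_real (ric n)) n"
    by (rule prod_sol_unique[where f = "\<lambda>n. X4 n + X6 n"])
      (use ric_pos l2_sum_rec_first_order[OF l2_add(1)[OF l2] rec(3)] in \<open>auto simp: less_imp_neq[symmetric]\<close>)
qed

lemma kernel_sum_diff_one_dim:
  assumes opposite_type: "(eL < bL \<and> eR > bR) \<or> (eL > bL \<and> eR < bR)"
  obtains D S where "\<And>n. D (n + 1) = complex_of_real (b n / c n) * D n"
    and "\<And>n. S (n + 2) = complex_of_real (pS n) * S (n + 1) + complex_of_real (qS n) * S n"
    and "l2 S" "l2 D" "S 0 + D 0 \<noteq> 0"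
    and "\<And>X4 X5 X6. T_kernel X4 X5 X6 \<Longrightarrow> \<exists>\<alpha>. \<forall>n. X4 n + X6 n = \<alpha> * S n \<and> X4 n - X6 n = \<alpha> * D n"
proof (cases "eL < bL")
  case True
  define \<phi> where "\<phi> = prod_sol (\<lambda>n. complex_of_real (b n / c n))"
  show thesis
  proof (rule that[where S = "\<lambda>n. 0" and D = \<phi>])
    show "\<phi> (n + 1) = complex_of_real (b n / c n) * \<phi> n" for n
      unfolding \<phi>_def by (rule prod_sol_step) (use b_pos c_pos in \<open>simp add: less_imp_neq[symmetric]\<close>)
    show "l2 \<phi>" unfolding \<phi>_def by (rule l2_prod_sol_b_div_c) (use True opposite_type in auto)
    show "\<exists>\<alpha>. \<forall>n. X4 n + X6 n = \<alpha> * 0 \<and> X4 n - X6 n = \<alpha> * \<phi> n" if "T_kernel X4 X5 X6" for X4 X5 X6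
      using kernel_diff_mode[OF True that] unfolding \<phi>_def by (metis mult_zero_right)
  qed (auto simp: l2_zero \<phi>_def)
next
  case False
  then have "eL > bL" using opposite_type by auto
  define \<psi> where "\<psi> = prod_sol (\<lambda>n. complex_of_real (ric n))"
  show thesis
  proof (rule that[where S = \<psi> and D = "\<lambda>n. 0"])
    show "\<psi> (n + 2) = complex_of_real (pS n) * \<psi> (n + 1) + complex_of_real (qS n) * \<psi> n" for n
      unfolding \<psi>_def by (rule prod_sol_ric_sum_rec)
    show "l2 \<psi>" unfolding \<psi>_def by (rule l2_prod_sol_ric) (use \<open>eL > bL\<close> opposite_type in auto)
    show "\<exists>\<alpha>. \<forall>n. X4 n + X6 n = \<alpha> * \<psi> n \<and> X4 n - X6 n = \<alpha> * 0" if "T_kernel X4 X5 X6" for X4 X5 X6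
      using kernel_sum_mode[OF \<open>eL > bL\<close> that] unfolding \<psi>_def by (metis mult_zero_right)
  qed (auto simp: l2_zero \<psi>_def)
qed

lemma kernel_one_dim:
  assumes opposite_type: "(eL < bL \<and> eR > bR) \<or> (eL > bL \<and> eR < bR)"
  obtains V4 V5 V6 where "T_kernel V4 V5 V6" and "V4 0 \<noteq> 0"
    and "\<And>X4 X5 X6. T_kernel X4 X5 X6 \<Longrightarrow> \<exists>\<alpha>. X4 = (\<lambda>n. \<alpha> * V4 n) \<and> X5 = (\<lambda>n. \<alpha> * V5 n) \<and> X6 = (\<lambda>n. \<alpha> * V6 n)"
proof -
  obtain D S where D: "\<And>n. D (n + 1) = complex_of_real (b n / c n) * D n"
    and S: "\<And>n. S (n + 2) = complex_of_real (pS n) * S (n + 1) + complex_of_real (qS n) * S n"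
    and l2: "l2 S" "l2 D" and nz: "S 0 + D 0 \<noteq> 0"
    and span: "\<And>X4 X5 X6. T_kernel X4 X5 X6 \<Longrightarrow> \<exists>\<alpha>. \<forall>n. X4 n + X6 n = \<alpha> * S n \<and> X4 n - X6 n = \<alpha> * D n"
    by (fact kernel_sum_diff_one_dim[OF opposite_type])
  define V4 where "V4 n = complex_of_real (1 / 2) * S n + complex_of_real (1 / 2) * D n" for n
  define V5 where "V5 n = complex_of_real (- b (n + 2) / d n) * S (n + 2)" for n
  define V6 where "V6 n = complex_of_real (1 / 2) * S n + complex_of_real (- 1 / 2) * D n" for n
  show thesis
  proof (rule that)
    have "const_ends (\<lambda>n. - b (n + 2) / d n)"
      by (rule const_ends_comp2[OF const_ends_shift[OF const_ends_b] const_ends_d])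
    then have "l2 V5" unfolding V5_def by (rule l2_mult_const_ends[OF _ l2_shift[OF l2(1)]])
    moreover have "l2 V4" unfolding V4_def by (rule l2_add(1)[OF l2_cmult[OF l2(1)] l2_cmult[OF l2(2)]])
    moreover have "l2 V6" unfolding V6_def by (rule l2_add(1)[OF l2_cmult[OF l2(1)] l2_cmult[OF l2(2)]])
    moreover have "T1 V4 V5 V6 = (\<lambda>n. 0)" "T2 V4 V5 V6 = (\<lambda>n. 0)" "T3 V4 V5 V6 = (\<lambda>n. 0)"
      using T_reconstruction[where S = S and D = D and F = "\<lambda>n. 0" and G = "\<lambda>n. 0" and H = "\<lambda>n. 0"] D S
      unfolding V4_def V5_def V6_def by simp_all
    ultimately show "T_kernel V4 V5 V6" unfolding T_kernel_def by blast
    show "V4 0 \<noteq> 0" unfolding V4_def using nz by (simp add: field_simps)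
    fix X4 X5 X6 assume X: "T_kernel X4 X5 X6"
    then obtain \<alpha> where \<alpha>: "\<And>n. X4 n + X6 n = \<alpha> * S n \<and> X4 n - X6 n = \<alpha> * D n" using span by blast
    have "X4 n = \<alpha> * V4 n" "X6 n = \<alpha> * V6 n" for n
      unfolding V4_def V6_def by (rule halves_of_sum_and_diff[OF \<alpha>[of n, THEN conjunct1] \<alpha>[of n, THEN conjunct2]])+
    moreover have "X5 n = \<alpha> * V5 n" for n
      using kernel_recurrences(2)[OF T_kernelD(4-6)[OF X], of n] \<alpha>[of "n + 2"] unfolding V5_def by simp
    ultimately show "\<exists>\<alpha>. X4 = (\<lambda>n. \<alpha> * V4 n) \<and> X5 = (\<lambda>n. \<alpha> * V5 n) \<and> X6 = (\<lambda>n. \<alpha> * V6 n)"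
      by (intro exI[of _ \<alpha>]) auto
  qed
qed

lemma T_l2:
  assumes l2: "l2 X4" "l2 X5" "l2 X6"
  shows "l2 (T1 X4 X5 X6)" and "l2 (T2 X4 X5 X6)" and "l2 (T3 X4 X5 X6)"
proof -
  note mb = l2_mult_const_ends[OF const_ends_comp[OF const_ends_b, of uminus]]
  note mc = l2_mult_const_ends[OF const_ends_comp[OF const_ends_c, of uminus]]
  have md: "l2 (\<lambda>n. complex_of_real (- d (n - 2)) * X5 (n - 2))"
    using l2_shift[OF l2_mult_const_ends[OF const_ends_comp[OF const_ends_d, of uminus] l2(2)], of "- 2"]
    by simp
  have "l2 (\<lambda>n. complex_of_real (- b n) * X4 n + complex_of_real (- b n) * X5 n
      + complex_of_real (- c n) * X6 (n + 1))"
    by (intro l2_add(1) mb mc l2_shift l2)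
  then show "l2 (T1 X4 X5 X6)" by (simp add: T1_def[abs_def])
  have "l2 (\<lambda>n. complex_of_real (- b n) * X4 n + complex_of_real (- d (n - 2)) * X5 (n - 2)
      + complex_of_real (- b n) * X6 n)"
    by (intro l2_add(1) mb md l2)
  then show "l2 (T2 X4 X5 X6)" by (simp add: T2_def[abs_def])
  have "l2 (\<lambda>n. complex_of_real (- c n) * X4 (n + 1) + complex_of_real (- b n) * X5 n
      + complex_of_real (- b n) * X6 n)"
    by (intro l2_add(1) mb mc l2_shift l2)
  then show "l2 (T3 X4 X5 X6)" by (simp add: T3_def[abs_def])
qed

end

section \<open>The type-II interface Hamiltonian at \<open>k = 0\<close>\<close>

lemma has_sum_finite_sum:
  fixes f :: "'i \<Rightarrow> 'a \<Rightarrow> real"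
  assumes "finite I" "\<And>i. i \<in> I \<Longrightarrow> (f i has_sum s i) A"
  shows "((\<lambda>x. \<Sum>i\<in>I. f i x) has_sum (\<Sum>i\<in>I. s i)) A"
  using assms by (induction I rule: finite_induct) (auto intro: has_sum_add)

lemma l2_6_iff:
  "w \<in> l2_6 \<longleftrightarrow> (\<forall>n j. j \<notin> {1..6} \<longrightarrow> w n j = 0) \<and> (\<forall>j\<in>{1..6}. l2 (\<lambda>n. w n j))"
proof
  assume w: "w \<in> l2_6"
  then have "(\<lambda>n. \<Sum>j\<in>{1..6}. (cmod (w n j))\<^sup>2) summable_on UNIV" unfolding l2_6_def by blast
  then have "l2 (\<lambda>n. w n j)" if "j \<in> {1..6}" for j
    unfolding l2_def by (rule summable_on_comparison_test) (use that in \<open>auto intro: member_le_sum\<close>)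
  then show "(\<forall>n j. j \<notin> {1..6} \<longrightarrow> w n j = 0) \<and> (\<forall>j\<in>{1..6}. l2 (\<lambda>n. w n j))"
    using w unfolding l2_6_def by blast
next
  assume w: "(\<forall>n j. j \<notin> {1..6} \<longrightarrow> w n j = 0) \<and> (\<forall>j\<in>{1..6}. l2 (\<lambda>n. w n j))"
  then have "((\<lambda>n. \<Sum>j\<in>{1..6}. (cmod (w n j))\<^sup>2) has_sum (\<Sum>j\<in>{1..6}. sqnorm (\<lambda>n. w n j))) UNIV"
    unfolding l2_def sqnorm_def by (intro has_sum_finite_sum) auto
  then show "w \<in> l2_6" using w unfolding l2_6_def summable_on_def by blast
qed

lemma l2_norm6_sq:
  assumes "w \<in> l2_6"
  shows "(l2_norm6 w)\<^sup>2 = (\<Sum>j\<in>{1..6}. sqnorm (\<lambda>n. w n j))"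
proof -
  have "((\<lambda>n. \<Sum>j\<in>{1..6}. (cmod (w n j))\<^sup>2) has_sum (\<Sum>j\<in>{1..6}. sqnorm (\<lambda>n. w n j))) UNIV"
    using assms unfolding l2_6_iff l2_def sqnorm_def by (intro has_sum_finite_sum) auto
  then have "(\<Sum>\<^sub>\<infinity>n. \<Sum>j\<in>{1..6}. (cmod (w n j))\<^sup>2) = (\<Sum>j\<in>{1..6}. sqnorm (\<lambda>n. w n j))"
    by (rule infsumI)
  moreover have "(\<Sum>j\<in>{1..6}. sqnorm (\<lambda>n. w n j)) \<ge> 0" by (simp add: sum_nonneg sqnorm_nonneg)
  ultimately show ?thesis unfolding l2_norm6_def by simp
qed

lemma sum_1_to_6: "(\<Sum>j\<in>{1..6::nat}. f j) = f 1 + f 2 + f 3 + f 4 + f 5 + f 6"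
  by (simp add: eval_nat_numeral atLeastAtMostSuc_conv add_ac)

definition glue :: "(int \<Rightarrow> complex) \<Rightarrow> (int \<Rightarrow> complex) \<Rightarrow> (int \<Rightarrow> complex) \<Rightarrow> (int \<Rightarrow> complex)
    \<Rightarrow> (int \<Rightarrow> complex) \<Rightarrow> (int \<Rightarrow> complex) \<Rightarrow> seq6" where
  "glue w1 w2 w3 w4 w5 w6 n j = (if j = 1 then w1 n else if j = 2 then w2 n else if j = 3 then w3 n
     else if j = 4 then w4 n else if j = 5 then w5 n else if j = 6 then w6 n else 0)"

lemma glue_components:
  assumes "w \<in> l2_6"
  shows "glue (\<lambda>n. w n 1) (\<lambda>n. w n 2) (\<lambda>n. w n 3) (\<lambda>n. w n 4) (\<lambda>n. w n 5) (\<lambda>n. w n 6) = w"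
  using assms unfolding l2_6_iff by (auto simp: glue_def fun_eq_iff)

lemma one_to_six_cases: "(j :: nat) \<in> {1..6} \<Longrightarrow> j = 1 \<or> j = 2 \<or> j = 3 \<or> j = 4 \<or> j = 5 \<or> j = 6"
  by auto

lemma glue_in_l2_6:
  assumes "l2 w1" "l2 w2" "l2 w3" "l2 w4" "l2 w5" "l2 w6"
  shows "glue w1 w2 w3 w4 w5 w6 \<in> l2_6"
  unfolding l2_6_iff
proof (intro conjI allI impI ballI)
  show "glue w1 w2 w3 w4 w5 w6 n j = 0" if "j \<notin> {1..6}" for n j using that by (auto simp: glue_def)
  show "l2 (\<lambda>n. glue w1 w2 w3 w4 w5 w6 n j)" if "j \<in> {1..6}" for j
    using one_to_six_cases[OF that] assms by (auto simp: glue_def)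
qed

lemma glue_eq_zero_iff:
  "glue w1 w2 w3 w4 w5 w6 = (\<lambda>n j. 0) \<longleftrightarrow>
    w1 = (\<lambda>n. 0) \<and> w2 = (\<lambda>n. 0) \<and> w3 = (\<lambda>n. 0) \<and> w4 = (\<lambda>n. 0) \<and> w5 = (\<lambda>n. 0) \<and> w6 = (\<lambda>n. 0)"
proof
  assume "glue w1 w2 w3 w4 w5 w6 = (\<lambda>n j. 0)"
  then have z: "glue w1 w2 w3 w4 w5 w6 n j = 0" for n j by simp
  show "w1 = (\<lambda>n. 0) \<and> w2 = (\<lambda>n. 0) \<and> w3 = (\<lambda>n. 0) \<and> w4 = (\<lambda>n. 0) \<and> w5 = (\<lambda>n. 0) \<and> w6 = (\<lambda>n. 0)"
    using z[of _ 1] z[of _ 2] z[of _ 3] z[of _ 4] z[of _ 5] z[of _ 6] by (simp add: glue_def fun_eq_iff)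
qed (simp add: glue_def fun_eq_iff)

lemma glue_zero: "glue (\<lambda>n. 0) (\<lambda>n. 0) (\<lambda>n. 0) (\<lambda>n. 0) (\<lambda>n. 0) (\<lambda>n. 0) = (\<lambda>n j. 0)"
  by (simp add: glue_eq_zero_iff)

lemma l2_6_diff: "w1 \<in> l2_6 \<Longrightarrow> w2 \<in> l2_6 \<Longrightarrow> (\<lambda>n j. w1 n j - w2 n j) \<in> l2_6"
  unfolding l2_6_iff using l2_diff by auto

lemma l2_norm6_nonneg: "l2_norm6 w \<ge> 0"
  unfolding l2_norm6_def by (intro real_sqrt_ge_zero infsum_nonneg) (auto intro: sum_nonneg)

lemma l2_norm6_glue_reflected:
  assumes "l2 Y1" "l2 Y2" "l2 Y3" "l2 X4" "l2 X5" "l2 X6"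
  shows "(l2_norm6 (glue (\<lambda>n. Y1 (- n)) (\<lambda>n. Y2 (- n)) (\<lambda>n. Y3 (- n)) X4 X5 X6))\<^sup>2
    = (sqnorm Y1 + sqnorm Y2 + sqnorm Y3) + (sqnorm X4 + sqnorm X5 + sqnorm X6)"
  using assms unfolding l2_norm6_sq[OF glue_in_l2_6[OF l2_reflect l2_reflect l2_reflect, OF assms]] sum_1_to_6
  by (simp add: glue_def sqnorm_reflect)

lemma l2_norm6_sq_reflected:
  assumes "v \<in> l2_6"
  shows "(l2_norm6 v)\<^sup>2 = (sqnorm (\<lambda>k. v (- k) 4) + sqnorm (\<lambda>k. v (- k) 5) + sqnorm (\<lambda>k. v (- k) 6))
    + (sqnorm (\<lambda>n. v n 1) + sqnorm (\<lambda>n. v n 2) + sqnorm (\<lambda>n. v n 3))"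
proof -
  have "l2 (\<lambda>n. v n 4)" "l2 (\<lambda>n. v n 5)" "l2 (\<lambda>n. v n 6)" using assms unfolding l2_6_iff by auto
  then show ?thesis unfolding l2_norm6_sq[OF assms] sum_1_to_6
    using sqnorm_reflect[of "\<lambda>n. v n 4"] sqnorm_reflect[of "\<lambda>n. v n 5"] sqnorm_reflect[of "\<lambda>n. v n 6"]
    by simp
qed

lemma add_le_max_mult:
  fixes a b x y k1 k2 :: real
  assumes "a \<le> k1 * x" "b \<le> k2 * y" "0 \<le> x" "0 \<le> y"
  shows "a + b \<le> max k1 k2 * (x + y)"
proof -
  have "k1 * x \<le> max k1 k2 * x" "k2 * y \<le> max k1 k2 * y" using assms(3,4) by (simp_all add: mult_right_mono)
  then show ?thesis using assms(1,2) by (simp add: distrib_left)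
qed

text \<open>Rows 4--6 of \<open>H_II(0)\<close>, read in the reflected index \<open>k = -n\<close>, have the shape of rows 1--3
  with the two bulks exchanged, so both off-diagonal blocks are junctions.\<close>

locale type_II_interface =
  fixes bp bm dp dm c :: real
  assumes bp_pos: "bp > 0" and bm_pos: "bm > 0" and bp_dp_pos: "bp + dp > 0" and bm_dm_pos: "bm + dm > 0"
    and c_pos: "c > 0"
begin

sublocale rows123: junction "bcoef bp bm" "ccoef bp bm dp dm c" "dcoef bp bm dp dm c"
    bm "bm + dm" bp "bp + dp" 3
  by unfold_locales (use bp_pos bm_pos bp_dp_pos bm_dm_pos c_pos in \<open>auto simp: bcoef_def ccoef_def dcoef_def\<close>)

sublocale rows456: junction "\<lambda>k. bcoef bp bm (- k)" "\<lambda>k. ccoef bp bm dp dm c (- k - 1)"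
    "\<lambda>k. dcoef bp bm dp dm c (- k - 2)" bp "bp + dp" bm "bm + dm" 3
  by unfold_locales (use bp_pos bm_pos bp_dp_pos bm_dm_pos c_pos in \<open>auto simp: bcoef_def ccoef_def dcoef_def\<close>)

abbreviation H where "H \<equiv> H_II bp bm dp dm c 0"

lemma H_eq_glue:
  "H w = glue
    (rows123.T1 (\<lambda>n. w n 4) (\<lambda>n. w n 5) (\<lambda>n. w n 6))
    (rows123.T2 (\<lambda>n. w n 4) (\<lambda>n. w n 5) (\<lambda>n. w n 6))
    (rows123.T3 (\<lambda>n. w n 4) (\<lambda>n. w n 5) (\<lambda>n. w n 6))
    (\<lambda>n. rows456.T1 (\<lambda>k. w (- k) 1) (\<lambda>k. w (- k) 2) (\<lambda>k. w (- k) 3) (- n))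
    (\<lambda>n. rows456.T2 (\<lambda>k. w (- k) 1) (\<lambda>k. w (- k) 2) (\<lambda>k. w (- k) 3) (- n))
    (\<lambda>n. rows456.T3 (\<lambda>k. w (- k) 1) (\<lambda>k. w (- k) 2) (\<lambda>k. w (- k) 3) (- n))"
  by (auto simp: fun_eq_iff glue_def H_II_def Let_def rows123.T1_def rows123.T2_def rows123.T3_def
      rows456.T1_def rows456.T2_def rows456.T3_def algebra_simps)

lemma H_in_l2_6:
  assumes "w \<in> l2_6"
  shows "H w \<in> l2_6"
proof -
  have l2: "l2 (\<lambda>n. w n j)" if "j \<in> {1..6}" for j using assms that unfolding l2_6_iff by blast
  show ?thesis unfolding H_eq_glue
    by (intro glue_in_l2_6 rows123.T_l2 l2_reflect rows456.T_l2) (simp_all add: l2 l2_reflect)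
qed

lemma same_signs_same_type:
  assumes "dp * dm > 0"
  shows "(bm + dm > bm \<and> bp + dp > bp) \<or> (bm + dm < bm \<and> bp + dp < bp)"
    and "(bp + dp > bp \<and> bm + dm > bm) \<or> (bp + dp < bp \<and> bm + dm < bm)"
  using assms by (auto simp: zero_less_mult_iff)

lemma H_kernel_blocks:
  assumes w: "w \<in> l2_6" and Hw: "H w = (\<lambda>n j. 0)"
  shows "rows123.T_kernel (\<lambda>n. w n 4) (\<lambda>n. w n 5) (\<lambda>n. w n 6)"
    and "rows456.T_kernel (\<lambda>k. w (- k) 1) (\<lambda>k. w (- k) 2) (\<lambda>k. w (- k) 3)"
proof -
  have l2: "l2 (\<lambda>n. w n j)" if "j \<in> {1..6}" for j using w that unfolding l2_6_iff by blast
  note zero = Hw[unfolded H_eq_glue glue_eq_zero_iff]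
  show "rows123.T_kernel (\<lambda>n. w n 4) (\<lambda>n. w n 5) (\<lambda>n. w n 6)"
    unfolding rows123.T_kernel_def using zero l2 by simp
  have "(\<lambda>n. rows456.T1 (\<lambda>k. w (- k) 1) (\<lambda>k. w (- k) 2) (\<lambda>k. w (- k) 3) (- n)) = (\<lambda>n. 0)"
    and "(\<lambda>n. rows456.T2 (\<lambda>k. w (- k) 1) (\<lambda>k. w (- k) 2) (\<lambda>k. w (- k) 3) (- n)) = (\<lambda>n. 0)"
    and "(\<lambda>n. rows456.T3 (\<lambda>k. w (- k) 1) (\<lambda>k. w (- k) 2) (\<lambda>k. w (- k) 3) (- n)) = (\<lambda>n. 0)"
    using zero by blast+
  from this[THEN fun_cong, of "- k" for k]
  show "rows456.T_kernel (\<lambda>k. w (- k) 1) (\<lambda>k. w (- k) 2) (\<lambda>k. w (- k) 3)"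
    unfolding rows456.T_kernel_def using l2_reflect[OF l2] by (simp add: fun_eq_iff)
qed

lemma glue_in_kernel:
  assumes X: "rows123.T_kernel X4 X5 X6" and Y: "rows456.T_kernel Y1 Y2 Y3"
  shows "glue (\<lambda>n. Y1 (- n)) (\<lambda>n. Y2 (- n)) (\<lambda>n. Y3 (- n)) X4 X5 X6 \<in> ker_H_II bp bm dp dm c 0"
proof -
  let ?w = "glue (\<lambda>n. Y1 (- n)) (\<lambda>n. Y2 (- n)) (\<lambda>n. Y3 (- n)) X4 X5 X6"
  have comps: "(\<lambda>n. ?w n 4) = X4" "(\<lambda>n. ?w n 5) = X5" "(\<lambda>n. ?w n 6) = X6"
    "(\<lambda>k. ?w (- k) 1) = Y1" "(\<lambda>k. ?w (- k) 2) = Y2" "(\<lambda>k. ?w (- k) 3) = Y3"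
    by (simp_all add: glue_def)
  have "?w \<in> l2_6"
    using X Y unfolding rows123.T_kernel_def rows456.T_kernel_def by (intro glue_in_l2_6 l2_reflect) auto
  moreover have "H ?w = (\<lambda>n j. 0)"
    using X Y unfolding H_eq_glue comps rows123.T_kernel_def rows456.T_kernel_def glue_eq_zero_iff by simp
  ultimately show ?thesis unfolding ker_H_II_def by blast
qed

lemma H_kernel_trivial_if_same_signs:
  assumes same: "dp * dm > 0" and w: "w \<in> l2_6" and Hw: "H w = (\<lambda>n j. 0)"
  shows "w = (\<lambda>n j. 0)"
proof -
  have upper: "(\<lambda>n. w n 4) = (\<lambda>n. 0) \<and> (\<lambda>n. w n 5) = (\<lambda>n. 0) \<and> (\<lambda>n. w n 6) = (\<lambda>n. 0)"
    by (rule rows123.kernel_trivial[OF same_signs_same_type(1)[OF same] H_kernel_blocks(1)[OF w Hw]])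
  have lower: "(\<lambda>k. w (- k) 1) = (\<lambda>n. 0) \<and> (\<lambda>k. w (- k) 2) = (\<lambda>n. 0) \<and> (\<lambda>k. w (- k) 3) = (\<lambda>n. 0)"
    by (rule rows456.kernel_trivial[OF same_signs_same_type(2)[OF same] H_kernel_blocks(2)[OF w Hw]])
  have "w n j = 0" for n j
  proof (cases "j \<in> {1..6}")
    case True
    then show ?thesis
      using one_to_six_cases[OF True] upper lower[unfolded fun_eq_iff]
      by (auto simp: fun_eq_iff) (metis minus_minus)+
  next
    case False
    then show ?thesis using w unfolding l2_6_iff by blast
  qed
  then show ?thesis by (simp add: fun_eq_iff)
qed

lemma H_solvable_if_same_signs:
  assumes same: "dp * dm > 0"
  obtains K where "\<And>v. v \<in> l2_6 \<Longrightarrow> \<exists>w. w \<in> l2_6 \<and> H w = v \<and> (l2_norm6 w)\<^sup>2 \<le> K * (l2_norm6 v)\<^sup>2"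
proof -
  obtain Kx where Kx: "\<And>F1 F2 F3. l2 F1 \<Longrightarrow> l2 F2 \<Longrightarrow> l2 F3 \<Longrightarrow> \<exists>X4 X5 X6. l2 X4 \<and> l2 X5 \<and> l2 X6
    \<and> sqnorm X4 + sqnorm X5 + sqnorm X6 \<le> Kx * (sqnorm F1 + sqnorm F2 + sqnorm F3)
    \<and> rows123.T1 X4 X5 X6 = F1 \<and> rows123.T2 X4 X5 X6 = F2 \<and> rows123.T3 X4 X5 X6 = F3"
    using rows123.T_bounded_solvable[OF same_signs_same_type(1)[OF same]] by blast
  obtain Ky where Ky: "\<And>F1 F2 F3. l2 F1 \<Longrightarrow> l2 F2 \<Longrightarrow> l2 F3 \<Longrightarrow> \<exists>X4 X5 X6. l2 X4 \<and> l2 X5 \<and> l2 X6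
    \<and> sqnorm X4 + sqnorm X5 + sqnorm X6 \<le> Ky * (sqnorm F1 + sqnorm F2 + sqnorm F3)
    \<and> rows456.T1 X4 X5 X6 = F1 \<and> rows456.T2 X4 X5 X6 = F2 \<and> rows456.T3 X4 X5 X6 = F3"
    using rows456.T_bounded_solvable[OF same_signs_same_type(2)[OF same]] by blast
  show thesis
  proof (rule that[of "max Ky Kx"])
    fix v assume v: "v \<in> l2_6"
    have l2v: "l2 (\<lambda>n. v n 1)" "l2 (\<lambda>n. v n 2)" "l2 (\<lambda>n. v n 3)"
      "l2 (\<lambda>n. v n 4)" "l2 (\<lambda>n. v n 5)" "l2 (\<lambda>n. v n 6)"
      using v unfolding l2_6_iff by auto
    obtain X4 X5 X6 where X: "l2 X4" "l2 X5" "l2 X6"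
      "sqnorm X4 + sqnorm X5 + sqnorm X6 \<le> Kx * (sqnorm (\<lambda>n. v n 1) + sqnorm (\<lambda>n. v n 2) + sqnorm (\<lambda>n. v n 3))"
      "rows123.T1 X4 X5 X6 = (\<lambda>n. v n 1)" "rows123.T2 X4 X5 X6 = (\<lambda>n. v n 2)"
      "rows123.T3 X4 X5 X6 = (\<lambda>n. v n 3)"
      using Kx[OF l2v(1-3)] by blast
    obtain Y1 Y2 Y3 where Y: "l2 Y1" "l2 Y2" "l2 Y3"
      "sqnorm Y1 + sqnorm Y2 + sqnorm Y3
        \<le> Ky * (sqnorm (\<lambda>k. v (- k) 4) + sqnorm (\<lambda>k. v (- k) 5) + sqnorm (\<lambda>k. v (- k) 6))"
      "rows456.T1 Y1 Y2 Y3 = (\<lambda>k. v (- k) 4)" "rows456.T2 Y1 Y2 Y3 = (\<lambda>k. v (- k) 5)"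
      "rows456.T3 Y1 Y2 Y3 = (\<lambda>k. v (- k) 6)"
      using Ky[OF l2_reflect[OF l2v(4)] l2_reflect[OF l2v(5)] l2_reflect[OF l2v(6)]] by blast
    define w where "w = glue (\<lambda>n. Y1 (- n)) (\<lambda>n. Y2 (- n)) (\<lambda>n. Y3 (- n)) X4 X5 X6"
    have comps: "(\<lambda>n. w n 4) = X4" "(\<lambda>n. w n 5) = X5" "(\<lambda>n. w n 6) = X6"
      "(\<lambda>k. w (- k) 1) = Y1" "(\<lambda>k. w (- k) 2) = Y2" "(\<lambda>k. w (- k) 3) = Y3"
      by (simp_all add: w_def glue_def)
    have "w \<in> l2_6" unfolding w_def by (intro glue_in_l2_6 l2_reflect X(1-3) Y(1-3))
    moreover have "H w = v"
      unfolding H_eq_glue comps X(5-7) Y(5-7) using glue_components[OF v] by simp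
    moreover have "(l2_norm6 w)\<^sup>2 \<le> max Ky Kx * (l2_norm6 v)\<^sup>2"
      unfolding w_def l2_norm6_glue_reflected[OF Y(1-3) X(1-3)] l2_norm6_sq_reflected[OF v]
      by (rule add_le_max_mult[OF Y(4) X(4)]) (simp_all add: sqnorm_nonneg)
    ultimately show "\<exists>w. w \<in> l2_6 \<and> H w = v \<and> (l2_norm6 w)\<^sup>2 \<le> max Ky Kx * (l2_norm6 v)\<^sup>2" by blast
  qed
qed

lemma H_kernel_eq_zero_if_same_signs:
  assumes "dp * dm > 0"
  shows "ker_H_II bp bm dp dm c 0 = {\<lambda>n j. 0}"
  using H_kernel_trivial_if_same_signs[OF assms] glue_in_kernel[OF rows123.T_kernel_zero rows456.T_kernel_zero]
  unfolding ker_H_II_def glue_zero by auto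

lemma H_diff: "H (\<lambda>n j. w1 n j - w2 n j) = (\<lambda>n j. H w1 n j - H w2 n j)"
  by (simp add: fun_eq_iff H_II_def Let_def algebra_simps)

lemma H_invertible_if_same_signs:
  assumes same: "dp * dm > 0"
  shows "invertible_l2 H"
proof -
  obtain K where K: "\<And>v. v \<in> l2_6 \<Longrightarrow> \<exists>w. w \<in> l2_6 \<and> H w = v \<and> (l2_norm6 w)\<^sup>2 \<le> K * (l2_norm6 v)\<^sup>2"
    using H_solvable_if_same_signs[OF same] by blast
  define G where "G v = (SOME w. w \<in> l2_6 \<and> H w = v \<and> (l2_norm6 w)\<^sup>2 \<le> K * (l2_norm6 v)\<^sup>2)" for v
  have G: "G v \<in> l2_6" "H (G v) = v" "(l2_norm6 (G v))\<^sup>2 \<le> K * (l2_norm6 v)\<^sup>2" if "v \<in> l2_6" for v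
    using someI_ex[OF K[OF that]] unfolding G_def[symmetric] by blast+
  have "G (H w) = w" if w: "w \<in> l2_6" for w
  proof -
    have "(\<lambda>n j. G (H w) n j - w n j) \<in> l2_6" by (rule l2_6_diff[OF G(1)[OF H_in_l2_6[OF w]] w])
    moreover have "H (\<lambda>n j. G (H w) n j - w n j) = (\<lambda>n j. 0)"
      unfolding H_diff G(2)[OF H_in_l2_6[OF w]] by simp
    ultimately have "(\<lambda>n j. G (H w) n j - w n j) = (\<lambda>n j. 0)"
      by (rule H_kernel_trivial_if_same_signs[OF same])
    then show ?thesis by (simp add: fun_eq_iff)
  qed
  moreover have "l2_norm6 (G v) \<le> sqrt K * l2_norm6 v" if "v \<in> l2_6" for v
  proof -
    have "l2_norm6 (G v) = sqrt ((l2_norm6 (G v))\<^sup>2)" using l2_norm6_nonneg by simp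
    also have "\<dots> \<le> sqrt (K * (l2_norm6 v)\<^sup>2)" by (rule real_sqrt_le_mono[OF G(3)[OF that]])
    also have "\<dots> = sqrt K * l2_norm6 v" using l2_norm6_nonneg by (simp add: real_sqrt_mult)
    finally show ?thesis .
  qed
  ultimately show ?thesis unfolding invertible_l2_def using G(1,2) by blast
qed

lemma opposite_signs_opposite_type:
  assumes "dp * dm < 0"
  shows "(bm + dm < bm \<and> bp + dp > bp) \<or> (bm + dm > bm \<and> bp + dp < bp)"
    and "(bp + dp < bp \<and> bm + dm > bm) \<or> (bp + dp > bp \<and> bm + dm < bm)"
  using assms by (auto simp: mult_less_0_iff)

lemma H_kernel_two_dim_if_opposite_signs:
  assumes opposite: "dp * dm < 0"
  shows "two_dim (ker_H_II bp bm dp dm c 0)"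
proof -
  obtain V4 V5 V6 where V: "rows123.T_kernel V4 V5 V6" "V4 0 \<noteq> 0"
    and V_span: "\<And>X4 X5 X6. rows123.T_kernel X4 X5 X6
      \<Longrightarrow> \<exists>\<alpha>. X4 = (\<lambda>n. \<alpha> * V4 n) \<and> X5 = (\<lambda>n. \<alpha> * V5 n) \<and> X6 = (\<lambda>n. \<alpha> * V6 n)"
    by (fact rows123.kernel_one_dim[OF opposite_signs_opposite_type(1)[OF opposite]])
  obtain W1 W2 W3 where W: "rows456.T_kernel W1 W2 W3" "W1 0 \<noteq> 0"
    and W_span: "\<And>X4 X5 X6. rows456.T_kernel X4 X5 X6
      \<Longrightarrow> \<exists>\<alpha>. X4 = (\<lambda>n. \<alpha> * W1 n) \<and> X5 = (\<lambda>n. \<alpha> * W2 n) \<and> X6 = (\<lambda>n. \<alpha> * W3 n)"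
    by (fact rows456.kernel_one_dim[OF opposite_signs_opposite_type(2)[OF opposite]])
  define u where "u = glue (\<lambda>n. 0) (\<lambda>n. 0) (\<lambda>n. 0) V4 V5 V6"
  define v where "v = glue (\<lambda>n. W1 (- n)) (\<lambda>n. W2 (- n)) (\<lambda>n. W3 (- n)) (\<lambda>n. 0) (\<lambda>n. 0) (\<lambda>n. 0)"
  have u: "u \<in> ker_H_II bp bm dp dm c 0"
    unfolding u_def using glue_in_kernel[OF V(1) rows456.T_kernel_zero] by simp
  have v: "v \<in> ker_H_II bp bm dp dm c 0"
    unfolding v_def by (rule glue_in_kernel[OF rows123.T_kernel_zero W(1)])
  have independent: "a = 0 \<and> b = 0" if z: "(\<lambda>n j. a * u n j + b * v n j) = (\<lambda>n j. 0)" for a b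
  proof -
    have "a * V4 0 = 0" "b * W1 0 = 0"
      using fun_cong[OF fun_cong[OF z, of 0], of 4] fun_cong[OF fun_cong[OF z, of 0], of 1]
      by (simp_all add: u_def v_def glue_def)
    then show ?thesis using V(2) W(2) by simp
  qed
  have spanning: "\<exists>a b. w = (\<lambda>n j. a * u n j + b * v n j)" if "w \<in> ker_H_II bp bm dp dm c 0" for w
  proof -
    have w: "w \<in> l2_6" "H w = (\<lambda>n j. 0)" using that unfolding ker_H_II_def by auto
    obtain \<alpha> where \<alpha>: "(\<lambda>n. w n 4) = (\<lambda>n. \<alpha> * V4 n)" "(\<lambda>n. w n 5) = (\<lambda>n. \<alpha> * V5 n)"
      "(\<lambda>n. w n 6) = (\<lambda>n. \<alpha> * V6 n)" using V_span[OF H_kernel_blocks(1)[OF w]] by blast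
    obtain \<beta> where \<beta>: "(\<lambda>k. w (- k) 1) = (\<lambda>n. \<beta> * W1 n)" "(\<lambda>k. w (- k) 2) = (\<lambda>n. \<beta> * W2 n)"
      "(\<lambda>k. w (- k) 3) = (\<lambda>n. \<beta> * W3 n)" using W_span[OF H_kernel_blocks(2)[OF w]] by blast
    have "w n j = \<alpha> * u n j + \<beta> * v n j" for n j
    proof (cases "j \<in> {1..6}")
      case True
      then show ?thesis
        using one_to_six_cases[OF True] \<alpha> \<beta>[unfolded fun_eq_iff]
        by (auto simp: u_def v_def glue_def fun_eq_iff) (metis minus_minus)+
    next
      case False
      then show ?thesis using w(1) unfolding l2_6_iff by (auto simp: u_def v_def glue_def)
    qed
    then show ?thesis by (intro exI[of _ \<alpha>] exI[of _ \<beta>]) (simp add: fun_eq_iff)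
  qed
  show ?thesis unfolding two_dim_def using u v independent spanning by blast
qed

end

theorem theorem14:
  fixes bp bm dp dm c :: real
  assumes "bp > 0" and "bm > 0" and "bp + dp > 0" and "bm + dm > 0" and "c > 0"
  shows "(dp * dm < 0 \<longrightarrow> two_dim (ker_H_II bp bm dp dm c 0)) \<and>
         (dp * dm > 0 \<longrightarrow> invertible_l2 (H_II bp bm dp dm c 0) \<and>
                         ker_H_II bp bm dp dm c 0 = {\<lambda>n j. 0})"
proof -
  interpret type_II_interface bp bm dp dm c using assms by unfold_locales
  show ?thesis
    using H_kernel_two_dim_if_opposite_signs H_invertible_if_same_signs H_kernel_eq_zero_if_same_signs
    by blast
qed

end
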